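(* Let $q$ be a prime power and $n$ a positive integer such that at least one of the following holds: ($q\ge 567$ and $n\ge 16$), ($q\ge 435$ and $n\ge 24$), ($q\ge 381$ and $n\ge 32$), ($q\ge 352$ and $n\ge 40$), ($q\ge 334$ and $n\ge 48$), ($q\ge 301$ and $n\ge 80$). Then for any integer $k\in[0,n/8]$, if there exist $k$-normal elements in $\mathbb{F}_{q^n}$ over $\mathbb{F}_q$, at least one of them is also primitive.
   Context: An element $\alpha\in\mathbb{F}_{q^n}$ is $k$-normal over $\mathbb{F}_q$ if the $\mathbb{F}_q$-vector space spanned by $\alpha,\alpha^q,\dots,\alpha^{q^{n-1}}$ has dimension $n-k$. An element is primitive if it generates the multiplicative group $\mathbb{F}_{q^n}^*$. *)

theory Defs
  imports "HOL-Computational_Algebra.Primes"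
begin

text \<open>A subfield F of the ambient field (the copy of F_q inside F_{q^n}).\<close>
definition is_subfield :: "'a::field set \<Rightarrow> bool" where
  "is_subfield F \<longleftrightarrow> 0 \<in> F \<and> 1 \<in> F \<and>
     (\<forall>x\<in>F. \<forall>y\<in>F. x + y \<in> F \<and> x * y \<in> F) \<and>
     (\<forall>x\<in>F. - x \<in> F) \<and> (\<forall>x\<in>F. x \<noteq> 0 \<longrightarrow> inverse x \<in> F)"

definition Fspan :: "'a::field set \<Rightarrow> ('i \<Rightarrow> 'a) \<Rightarrow> 'i set \<Rightarrow> 'a set" where
  "Fspan F v I = {(\<Sum>i\<in>I. c i * v i) | c. \<forall>i\<in>I. c i \<in> F}"

definition Findep :: "'a::field set \<Rightarrow> ('i \<Rightarrow> 'a) \<Rightarrow> 'i set \<Rightarrow> bool" where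
  "Findep F v I \<longleftrightarrow> (\<forall>c. (\<forall>i\<in>I. c i \<in> F) \<and> (\<Sum>i\<in>I. c i * v i) = 0 \<longrightarrow> (\<forall>i\<in>I. c i = 0))"

text \<open>alpha is k-normal over F (|F| = q) in an extension of degree n: the F-span of
  alpha, alpha^q, ..., alpha^(q^(n-1)) has dimension n - k, i.e. it has a basis
  consisting of n - k of these conjugates.\<close>
definition k_normal :: "'a::field set \<Rightarrow> nat \<Rightarrow> nat \<Rightarrow> nat \<Rightarrow> 'a \<Rightarrow> bool" where
  "k_normal F q n k \<alpha> \<longleftrightarrow> k \<le> n \<and>
     (\<exists>B \<subseteq> {..<n}. card B = n - k \<and> Findep F (\<lambda>i. \<alpha> ^ (q ^ i)) B \<and>
        Fspan F (\<lambda>i. \<alpha> ^ (q ^ i)) B = Fspan F (\<lambda>i. \<alpha> ^ (q ^ i)) {..<n})"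

definition primitive_elem :: "'a::field \<Rightarrow> bool" where
  "primitive_elem \<alpha> \<longleftrightarrow> \<alpha> \<noteq> 0 \<and> (\<forall>x. x \<noteq> 0 \<longrightarrow> (\<exists>i::nat. x = \<alpha> ^ i))"

definition prime_power :: "nat \<Rightarrow> bool" where
  "prime_power q \<longleftrightarrow> (\<exists>p m. prime p \<and> m > 0 \<and> q = p ^ m)"

end

(*
  Fix a k-normal element alpha and let W be the F-span of its conjugates, so |W| = q^(n-k).
  Letting the linearised polynomials act on W turns it into a commutative ring with unit alpha;
  its units y (those with span of conjugates equal to W) are k-normal, and they are the elements
  outside all r <= n - k maximal ideals. Inclusion-exclusion over the maximal ideals counts the
  primitive units by an alternating sum of the numbers of primitive elements in intersections of
  maximal ideals, which are additive subgroups U. By Vinogradov's formula that number is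
  theta (|U| - 1) up to an error 2^omega sqrt(q^n), where theta = phi(q^n - 1)/(q^n - 1) and omega
  counts the prime factors of q^n - 1, because a nontrivial multiplicative character sums to at
  most sqrt(q^n) over an additive subgroup. By the Chinese remainder theorem the main terms add up
  to theta |W| prod_M (1 - |M|/|W|) >= theta q^(n-k) (1 - 1/q)^r, and the resulting lower bound is
  positive as soon as q >= 301, n >= 16 and 8k <= n, which is all the case distinction provides.
*)

theory Submission
  imports Defs "HOL-Algebra.Multiplicative_Group" "HOL-Library.Set_Algebras" "HOL-Number_Theory.Cong"
begin

lemma pow_card_eq_self:
  fixes S :: "'a::field set"
  assumes fin: "finite S" and zero: "0 \<in> S"
    and mult: "\<And>x y. x \<in> S \<Longrightarrow> y \<in> S \<Longrightarrow> x * y \<in> S"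
    and inv: "\<And>x. x \<in> S \<Longrightarrow> x \<noteq> 0 \<Longrightarrow> inverse x \<in> S"
    and c: "c \<in> S"
  shows "c ^ card S = c"
proof (cases "c = 0")
  case True
  then show ?thesis using fin zero by (auto simp: card_gt_0_iff)
next
  case False
  have card_S: "card S = Suc (card (S - {0}))"
  proof -
    have "card S > 0" using fin zero by (auto simp: card_gt_0_iff)
    then show ?thesis using fin zero by (simp add: card_Diff_singleton)
  qed
  have "(\<Prod>y\<in>S-{0}. c * y) = (\<Prod>y\<in>S-{0}. y)"
    by (rule prod.reindex_bij_witness[of _ "\<lambda>y. inverse c * y" "\<lambda>y. c * y"])
       (use False c mult inv in auto)
  then have "c ^ card (S - {0}) * (\<Prod>y\<in>S-{0}. y) = 1 * (\<Prod>y\<in>S-{0}. y)"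
    by (simp add: prod.distrib)
  moreover have "(\<Prod>y\<in>S-{0}. y) \<noteq> 0" using fin by auto
  ultimately show ?thesis using card_S by simp
qed

lemma of_nat_card_eq_0:
  fixes S :: "'a::field set"
  assumes "finite S" and one: "1 \<in> S"
    and add: "\<And>x y. x \<in> S \<Longrightarrow> y \<in> S \<Longrightarrow> x + y \<in> S"
    and uminus: "\<And>x. x \<in> S \<Longrightarrow> - x \<in> S"
  shows "of_nat (card S) = (0::'a)"
proof -
  have "(\<Sum>y\<in>S. 1 + y) = (\<Sum>y\<in>S. y)"
    by (rule sum.reindex_bij_witness[of _ "\<lambda>y. y + - 1" "\<lambda>y. 1 + y"])
       (use one add uminus in \<open>auto simp: algebra_simps\<close>, metis add uminus one diff_conv_add_uminus)
  then show ?thesis by (simp add: sum.distrib)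
qed

definition ring_of_field :: "'a::field ring" where
  "ring_of_field = \<lparr>carrier = UNIV, mult = (*), one = 1, zero = 0, add = (+)\<rparr>"

lemma field_ring_of_field: "field (ring_of_field :: 'a::field ring)"
proof -
  have inverse: "\<exists>y. y * x = 1 \<and> x * y = 1" if "x \<noteq> 0" for x :: 'a
    using that by (intro exI[of _ "inverse x"]) auto
  have "cring (ring_of_field :: 'a ring)"
    by unfold_locales
       (auto simp: ring_of_field_def Units_def algebra_simps intro: exI[of _ "- x" for x])
  then interpret cring "ring_of_field :: 'a ring" .
  show ?thesis by unfold_locales (auto simp: ring_of_field_def Units_def inverse)
qed

lemma primitive_elem_exists: "\<exists>g::'a::{field,finite}. primitive_elem g"
proof -
  let ?R = "ring_of_field :: 'a ring"
  have pow: "x [^]\<^bsub>?R\<^esub> i = x ^ i" for x :: 'a and i :: nat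
    by (induct i) (simp_all add: ring_of_field_def)
  have units: "carrier (mult_of ?R) = UNIV - {0}"
    by (simp add: ring_of_field_def)
  have "\<exists>g\<in>carrier (mult_of ?R). carrier (mult_of ?R) = {g [^]\<^bsub>?R\<^esub> i |i::nat. i \<in> UNIV}"
    by (rule field.finite_field_mult_group_has_gen[OF field_ring_of_field])
       (simp add: ring_of_field_def)
  then obtain g where "g \<noteq> 0" and "UNIV - {0} = {g [^]\<^bsub>?R\<^esub> i |i::nat. i \<in> UNIV}"
    unfolding units by blast
  then show ?thesis unfolding primitive_elem_def pow by blast
qed

lemma of_bool_ball_not_eq_sum_Pow:
  assumes "finite A"
  shows "(of_bool (\<forall>a\<in>A. \<not> P a) :: 'c::comm_ring_1) =
    (\<Sum>T\<in>Pow A. (-1) ^ card T * of_bool (\<forall>a\<in>T. P a))"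
proof -
  have of_bool_ball: "(of_bool (\<forall>a\<in>B. Q a) :: 'c) = (\<Prod>a\<in>B. of_bool (Q a))"
    if "finite B" for B Q
    using that by (induct B rule: finite_induct) (simp_all add: of_bool_conj)
  have "(of_bool (\<forall>a\<in>A. \<not> P a) :: 'c) = (\<Prod>a\<in>A. - of_bool (P a) + 1)"
    by (simp add: of_bool_ball[OF assms] of_bool_not_iff)
  also have "\<dots> = (\<Sum>T\<in>Pow A. (\<Prod>a\<in>T. - of_bool (P a)) * (\<Prod>a\<in>A - T. 1))"
    by (rule prod_add[OF assms])
  also have "\<dots> = (\<Sum>T\<in>Pow A. (-1) ^ card T * of_bool (\<forall>a\<in>T. P a))"
    using assms by (intro sum.cong refl) (auto simp: prod_uminus of_bool_ball finite_subset)
  finally show ?thesis .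
qed

lemma sum_Pow_neg_one_pow_card:
  assumes "finite A" and "A \<noteq> {}"
  shows "(\<Sum>T\<in>Pow A. (-1) ^ card T :: 'c::comm_ring_1) = 0"
  using of_bool_ball_not_eq_sum_Pow[OF assms(1), of "\<lambda>_. True"] assms(2) by simp

lemma card_avoiding_eq_sum_Pow:
  fixes X :: "'a set" and A :: "'a set set"
  assumes "finite X" and "finite A"
  shows "real (card {x\<in>X. P x \<and> (\<forall>M\<in>A. x \<notin> M)}) =
    (\<Sum>T\<in>Pow A. (-1) ^ card T * real (card {x\<in>X \<inter> \<Inter>T. P x}))"
proof -
  have "real (card {x\<in>X. P x \<and> (\<forall>M\<in>A. x \<notin> M)}) = (\<Sum>x\<in>X. of_bool (P x) * of_bool (\<forall>M\<in>A. \<not> x \<in> M))"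
    using assms(1) by (simp add: Collect_conj_eq Int_commute Int_left_commute flip: of_bool_conj)
  also have "\<dots> = (\<Sum>x\<in>X. \<Sum>T\<in>Pow A. (-1) ^ card T * of_bool (P x \<and> x \<in> \<Inter>T))"
    by (simp add: of_bool_ball_not_eq_sum_Pow[OF assms(2)] sum_distrib_left of_bool_conj mult_ac)
  also have "\<dots> = (\<Sum>T\<in>Pow A. (-1) ^ card T * (\<Sum>x\<in>X. of_bool (P x \<and> x \<in> \<Inter>T)))"
    by (simp add: sum.swap[of _ X] sum_distrib_left)
  also have "\<dots> = (\<Sum>T\<in>Pow A. (-1) ^ card T * real (card {x\<in>X \<inter> \<Inter>T. P x}))"
    using assms(1) by (simp add: Collect_conj_eq Int_commute Int_left_commute)
  finally show ?thesis .
qed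

lemma abs_sum_Pow_neg_one_pow_le:
  assumes "finite A" and "\<And>T. T \<subseteq> A \<Longrightarrow> \<bar>e T\<bar> \<le> E"
  shows "\<bar>\<Sum>T\<in>Pow A. (-1) ^ card T * e T\<bar> \<le> 2 ^ card A * (E :: real)"
proof -
  have "\<bar>\<Sum>T\<in>Pow A. (-1) ^ card T * e T\<bar> \<le> (\<Sum>T\<in>Pow A. \<bar>(-1) ^ card T * e T\<bar>)"
    by (rule sum_abs)
  also have "\<dots> \<le> (\<Sum>T\<in>Pow A. E)" by (rule sum_mono) (simp add: abs_mult assms(2))
  also have "\<dots> = 2 ^ card A * E" using assms(1) by (simp add: card_Pow)
  finally show ?thesis .
qed

lemma prod_primes_dvd_iff:
  fixes S :: "nat set"
  assumes "finite S" and "\<And>p. p \<in> S \<Longrightarrow> prime p"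
  shows "\<Prod>S dvd j \<longleftrightarrow> (\<forall>p\<in>S. p dvd j)"
  using assms
proof (induct S rule: finite_induct)
  case (insert p S)
  have "coprime p (\<Prod>S)" using insert by (intro prod_coprime_right primes_coprime) auto
  then show ?case
    using insert by (auto intro: divides_mult dest: dvd_mult_left dvd_mult_right)
qed simp

lemma prod_prime_factors_subset_dvd:
  fixes m :: nat
  assumes "S \<subseteq> prime_factors m"
  shows "\<Prod>S dvd m"
proof -
  have "finite S" using assms by (rule finite_subset) simp
  then show ?thesis using assms by (subst prod_primes_dvd_iff) auto
qed

lemma coprime_iff_prime_factors:
  fixes j m :: nat
  assumes "m > 0"
  shows "coprime j m \<longleftrightarrow> (\<forall>p\<in>prime_factors m. \<not> p dvd j)"
proof
  assume "coprime j m"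
  then show "\<forall>p\<in>prime_factors m. \<not> p dvd j"
    by (auto dest: coprime_common_divisor simp: in_prime_factors_iff)
next
  assume no_common: "\<forall>p\<in>prime_factors m. \<not> p dvd j"
  show "coprime j m"
  proof (rule coprimeI)
    fix c assume c: "c dvd j" "c dvd m"
    show "is_unit c"
    proof (rule ccontr)
      assume "\<not> is_unit c"
      then obtain p where p: "prime p" "p dvd c" using prime_factor_nat[of c] by auto
      then have "p \<in> prime_factors m" using c(2) assms by (auto simp: in_prime_factors_iff intro: dvd_trans)
      then show False using no_common p c(1) by (blast intro: dvd_trans)
    qed
  qed
qed

definition additive_subgroup :: "'a::ab_group_add set \<Rightarrow> bool" where
  "additive_subgroup U \<longleftrightarrow> 0 \<in> U \<and> (\<forall>x\<in>U. \<forall>y\<in>U. x + y \<in> U) \<and> (\<forall>x\<in>U. - x \<in> U)"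

lemma additive_subgroupD:
  assumes "additive_subgroup U"
  shows "0 \<in> U" "x \<in> U \<Longrightarrow> y \<in> U \<Longrightarrow> x + y \<in> U" "x \<in> U \<Longrightarrow> - x \<in> U"
    "x \<in> U \<Longrightarrow> y \<in> U \<Longrightarrow> x - y \<in> U"
  using assms unfolding additive_subgroup_def by (metis diff_conv_add_uminus)+

lemma card_set_plus_mult_card_Int:
  fixes I J :: "'a::ab_group_add set"
  assumes I: "additive_subgroup I" and J: "additive_subgroup J" and "finite I" "finite J"
  shows "card (I + J) * card (I \<inter> J) = card I * card J"
proof -
  let ?fibre = "\<lambda>s. {p \<in> I \<times> J. fst p + snd p = s}"
  have fibre: "card (?fibre s) = card (I \<inter> J)" if "s \<in> I + J" for s
  proof -
    obtain a b where ab: "a \<in> I" "b \<in> J" "s = a + b" using \<open>s \<in> I + J\<close> by (auto elim: set_plus_elim)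
    have "bij_betw (\<lambda>d. (a + d, b - d)) (I \<inter> J) (?fibre s)"
      by (rule bij_betwI[where g="\<lambda>p. fst p - a"])
         (use ab additive_subgroupD[OF I] additive_subgroupD[OF J] in
           \<open>auto simp: algebra_simps, metis add_diff_cancel_left' diff_diff_eq2\<close>)
    then show ?thesis by (simp add: bij_betw_same_card)
  qed
  have "I \<times> J = (\<Union>s\<in>I + J. ?fibre s)" by (auto intro: set_plus_intro)
  then have "card I * card J = card (\<Union>s\<in>I + J. ?fibre s)" by (simp add: card_cartesian_product)
  also have "\<dots> = (\<Sum>s\<in>I + J. card (?fibre s))"
    by (rule card_UN_disjoint) (use assms in \<open>auto simp: finite_set_plus\<close>)
  also have "\<dots> = card (I + J) * card (I \<inter> J)" by (simp add: fibre)
  finally show ?thesis by simp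
qed

section \<open>Numerical estimates\<close>

text \<open>The density \<open>\<phi>(m)/m\<close> of the residues modulo \<open>m\<close> that are coprime to \<open>m\<close>.\<close>
definition coprime_density :: "nat \<Rightarrow> real" where
  "coprime_density m = (\<Prod>p\<in>prime_factors m. 1 - 1 / real p)"

lemma coprime_density_pos: "coprime_density m > 0"
  unfolding coprime_density_def
proof (rule prod_pos)
  fix p assume "p \<in> prime_factors m"
  then have "p > 1" using in_prime_factors_imp_prime prime_gt_1_nat by blast
  then show "0 < 1 - 1 / real p" by simp
qed

lemma sum_Pow_prime_factors_eq_coprime_density:
  "(\<Sum>S\<in>Pow (prime_factors m). (-1) ^ card S / real (\<Prod>S)) = coprime_density m"
proof -
  have "coprime_density m = (\<Prod>p\<in>prime_factors m. - (1 / real p) + 1)"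
    unfolding coprime_density_def by simp
  also have "\<dots> = (\<Sum>S\<in>Pow (prime_factors m). (\<Prod>p\<in>S. - (1 / real p)) * (\<Prod>p\<in>prime_factors m - S. 1))"
    by (rule prod_add) simp
  also have "\<dots> = (\<Sum>S\<in>Pow (prime_factors m). (-1) ^ card S / real (\<Prod>S))"
    by (simp add: prod_uminus prod_dividef of_nat_prod)
  finally show ?thesis by simp
qed

text \<open>\<open>(2 / (1 - 1/p))\<^sup>5 = prime_excess p * p\<close>.\<close>
definition prime_excess :: "nat \<Rightarrow> real" where
  "prime_excess p = 32 * real p ^ 4 / (real p - 1) ^ 5"

lemma prime_excess_le_1:
  assumes p: "p \<ge> 37"
  shows "prime_excess p \<le> 1"
proof -
  have r: "(real p - 1) / real p = 1 + (- 1 / real p)" using p by (simp add: field_simps)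
  have "((real p - 1) / real p) ^ 4 \<ge> 1 + real 4 * (- 1 / real p)"
    unfolding r by (rule Bernoulli_inequality) (use p in \<open>simp add: field_simps\<close>)
  moreover have "1 + real 4 * (- 1 / real p) \<ge> 8 / 9" using p by (simp add: field_simps)
  ultimately have "((real p - 1) / real p) ^ 4 * real p ^ 4 \<ge> 8 / 9 * real p ^ 4"
    by (intro mult_right_mono) simp_all
  then have "(real p - 1) ^ 4 \<ge> 8 / 9 * real p ^ 4"
    using p by (simp add: power_divide)
  moreover have "real p - 1 \<ge> 36" using p by simp
  ultimately have "(real p - 1) * (real p - 1) ^ 4 \<ge> 36 * (8 / 9 * real p ^ 4)"
    by (intro mult_mono) simp_all
  then show ?thesis using p unfolding prime_excess_def by (simp add: divide_le_eq eval_nat_numeral)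
qed

lemma prime_less_37:
  fixes p :: nat
  assumes "prime p" "p < 37"
  shows "p \<in> {2, 3, 5, 7, 11, 13, 17, 19, 23, 29, 31}"
proof -
  have "d dvd p \<Longrightarrow> d = 1 \<or> d = p" for d using assms(1) unfolding prime_nat_iff by blast
  from this[of 2] this[of 3] this[of 5] have "p = 2 \<or> p = 3 \<or> p = 5 \<or> (\<not> 2 dvd p \<and> \<not> 3 dvd p \<and> \<not> 5 dvd p)"
    by auto
  then have "p = 2 \<or> p = 3 \<or> p = 5 \<or> p = 7 \<or> p = 11 \<or> p = 13 \<or> p = 17 \<or> p = 19 \<or> p = 23 \<or>
      p = 29 \<or> p = 31"
    using assms(2) prime_gt_1_nat[OF assms(1)] by presburger
  then show ?thesis by simp
qed

lemma prod_prime_excess_le: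
  fixes P :: "nat set"
  assumes fin: "finite P" and primes: "\<And>p. p \<in> P \<Longrightarrow> prime p"
  shows "(\<Prod>p\<in>P. prime_excess p) \<le> 2 ^ 32"
proof -
  define S where "S = {2, 3, 5, 7, 11, 13, 17, 19, 23, 29, 31 :: nat}"
  have excess_S: "prime_excess p \<ge> 1" if "p \<in> S" for p
    using that unfolding S_def prime_excess_def by auto
  have excess_nonneg: "prime_excess p \<ge> 0" if "p \<in> P" for p
    using primes[OF that] prime_ge_2_nat[of p] unfolding prime_excess_def by simp
  have "(\<Prod>p\<in>P - S. prime_excess p) \<le> 1"
  proof (rule prod_le_1)
    fix p assume p: "p \<in> P - S"
    have "p \<ge> 37"
    proof (rule ccontr)
      assume "\<not> p \<ge> 37"
      then have "p \<in> S" using prime_less_37[OF primes, of p] p unfolding S_def by auto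
      then show False using p by blast
    qed
    then show "0 \<le> prime_excess p \<and> prime_excess p \<le> 1"
      using prime_excess_le_1 p excess_nonneg by auto
  qed
  moreover have "(\<Prod>p\<in>S - P. prime_excess p) \<ge> 1" by (rule prod_ge_1) (use excess_S in auto)
  moreover have "(\<Prod>p\<in>P \<inter> S. prime_excess p) \<ge> 0" by (rule prod_nonneg) (use excess_nonneg in auto)
  ultimately have "(\<Prod>p\<in>P \<inter> S. prime_excess p) * (\<Prod>p\<in>P - S. prime_excess p)
      \<le> (\<Prod>p\<in>P \<inter> S. prime_excess p) * (\<Prod>p\<in>S - P. prime_excess p)"
    by (intro mult_left_mono) simp_all
  also have "\<dots> = (\<Prod>p\<in>S. prime_excess p)"
    using prod.Int_Diff[of S prime_excess P] by (simp add: S_def Int_commute)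
  finally have "(\<Prod>p\<in>P. prime_excess p) \<le> (\<Prod>p\<in>S. prime_excess p)"
    using prod.Int_Diff[OF fin, of prime_excess S] by simp
  also have "\<dots> \<le> 2 ^ 32" unfolding S_def prime_excess_def by simp
  finally show ?thesis .
qed

lemma prime_factors_count_bound:
  assumes "m > 0"
  shows "(2 ^ card (prime_factors m) / coprime_density m) ^ 5 \<le> 2 ^ 32 * real m"
proof -
  have "2 ^ card (prime_factors m) / coprime_density m = (\<Prod>p\<in>prime_factors m. 2 / (1 - 1 / real p))"
    unfolding coprime_density_def by (simp add: prod_dividef)
  then have "(2 ^ card (prime_factors m) / coprime_density m) ^ 5
      = (\<Prod>p\<in>prime_factors m. (2 / (1 - 1 / real p)) ^ 5)"
    by (simp add: prod_power_distrib)
  also have "\<dots> = (\<Prod>p\<in>prime_factors m. prime_excess p * real p)"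
  proof (rule prod.cong[OF refl])
    fix p assume "p \<in> prime_factors m"
    then have "real p \<ge> 2" using prime_ge_2_nat by (simp add: in_prime_factors_iff)
    then show "(2 / (1 - 1 / real p)) ^ 5 = prime_excess p * real p"
      unfolding prime_excess_def by (simp add: field_simps power_divide eval_nat_numeral)
  qed
  also have "\<dots> = (\<Prod>p\<in>prime_factors m. prime_excess p) * real (\<Prod>(prime_factors m))"
    by (simp add: prod.distrib of_nat_prod)
  also have "\<dots> \<le> 2 ^ 32 * real m"
  proof (rule mult_mono)
    have "\<Prod>(prime_factors m) dvd m"
      by (rule prod_primes_dvd_iff[THEN iffD2]) (auto simp: in_prime_factors_iff)
    then have "\<Prod>(prime_factors m) \<le> m" using assms by (rule dvd_imp_le)
    then show "real (\<Prod>(prime_factors m)) \<le> real m" by (simp only: of_nat_le_iff)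
    show "(\<Prod>p\<in>prime_factors m. prime_excess p) \<le> 2 ^ 32"
      by (rule prod_prime_excess_le) auto
  qed (simp_all add: prod_nonneg)
  finally show ?thesis .
qed

lemma pred_pow_35_ge:
  fixes q :: nat
  assumes "q \<ge> 301"
  shows "2 ^ 57 * q ^ 28 \<le> (q - 1) ^ 35"
proof -
  have "(300 * q) ^ 28 \<le> ((q - 1) * 301) ^ 28" using assms by (intro power_mono) simp_all
  moreover have "300 ^ 7 \<le> (q - 1) ^ 7" using assms by (intro power_mono) simp_all
  ultimately have "(300 * q) ^ 28 * 300 ^ 7 \<le> ((q - 1) * 301) ^ 28 * (q - 1) ^ 7"
    by (rule mult_mono) simp_all
  then have "300 ^ 35 * q ^ 28 \<le> (q - 1) ^ 35 * 301 ^ 28"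
    by (simp add: power_mult_distrib power_add[symmetric] mult_ac)
  moreover have "2 ^ 57 * 301 ^ 28 \<le> (300 ^ 35 :: nat)" by simp
  then have "2 ^ 57 * 301 ^ 28 * q ^ 28 \<le> 300 ^ 35 * q ^ 28" by simp
  ultimately have "2 ^ 57 * q ^ 28 * 301 ^ 28 \<le> (q - 1) ^ 35 * 301 ^ 28" by (simp add: mult_ac)
  then show ?thesis by simp
qed

lemma half_pred_pow_ge:
  fixes q n s :: nat
  assumes q: "q \<ge> 301" and n: "n \<ge> 16" and s: "7 * n \<le> 8 * s"
  shows "2 ^ 64 * real q ^ (7 * n) \<le> ((real q - 1) / 2) ^ (10 * s)"
proof -
  define B where "B = (real q - 1) / 2"
  have B: "B \<ge> 1" unfolding B_def using q by simp
  have "real (2 ^ 57 * q ^ 28) \<le> real ((q - 1) ^ 35)" using pred_pow_35_ge[OF q] by linarith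
  then have B35: "2 ^ 22 * real q ^ 28 \<le> B ^ 35"
    unfolding B_def using q by (simp add: of_nat_diff power_divide field_simps)
  have "(2 ^ 64 * real q ^ (7 * n)) ^ 4 = 2 ^ 256 * real q ^ (28 * n)"
    by (simp add: power_mult_distrib power_mult[symmetric] mult_ac)
  also have "\<dots> \<le> 2 ^ (22 * n) * real q ^ (28 * n)" using n by (intro mult_right_mono power_increasing) simp_all
  also have "\<dots> = (2 ^ 22 * real q ^ 28) ^ n" by (simp add: power_mult_distrib power_mult)
  also have "\<dots> \<le> (B ^ 35) ^ n" using B35 by (intro power_mono) simp_all
  also have "\<dots> \<le> B ^ (40 * s)" using B s by (simp add: power_mult[symmetric] power_increasing)
  also have "\<dots> = (B ^ (10 * s)) ^ 4" by (simp add: power_mult[symmetric] mult_ac)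
  finally have "2 ^ 64 * real q ^ (7 * n) \<le> B ^ (10 * s)"
    using power_mono_iff[of "2 ^ 64 * real q ^ (7 * n)" "B ^ (10 * s)" 4] B by simp
  then show ?thesis unfolding B_def .
qed

lemma counting_inequality:
  fixes q n s r w :: nat and \<theta> m :: real
  assumes q: "q \<ge> 301" and n: "n \<ge> 16" and s: "7 * n \<le> 8 * s" and "r \<le> s"
    and \<theta>: "\<theta> > 0" and m: "(2 ^ w / \<theta>) ^ 5 \<le> 2 ^ 32 * m" "m < real q ^ n"
  shows "2 ^ r * 2 ^ w * sqrt (real q ^ n) < \<theta> * real q ^ s * (1 - 1 / real q) ^ r"
proof -
  define X where "X = 2 ^ w / \<theta>"
  define B where "B = (real q - 1) / 2"
  have "X ^ 5 < 2 ^ 32 * real q ^ n" using m unfolding X_def by simp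
  then have "(X ^ 5) ^ 2 < (2 ^ 32 * real q ^ n) ^ 2"
    using \<theta> unfolding X_def by (intro power_strict_mono) simp_all
  then have "X ^ 10 < 2 ^ 64 * real q ^ (2 * n)"
    by (simp add: power_mult_distrib power_mult[symmetric] mult_ac)
  moreover have "sqrt (real q ^ n) ^ 10 = real q ^ (5 * n)"
    using power_mult[of "sqrt (real q ^ n)" 2 5] power_mult[of "real q" n 5] by (simp add: mult.commute)
  ultimately have "(X * sqrt (real q ^ n)) ^ 10 < 2 ^ 64 * real q ^ (2 * n) * real q ^ (5 * n)"
    using q by (simp add: power_mult_distrib)
  also have "\<dots> = 2 ^ 64 * real q ^ (7 * n)" by (simp add: power_add[symmetric])
  also have "\<dots> \<le> (B ^ s) ^ 10"
    using half_pred_pow_ge[OF q n s] unfolding B_def by (simp add: power_mult[symmetric] mult_ac)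
  finally have XB: "X * sqrt (real q ^ n) < B ^ s"
    by (rule power_less_imp_less_base) (use q in \<open>simp add: B_def\<close>)
  define a where "a = (1 - 1 / real q) / 2"
  have "2 ^ r * 2 ^ w * sqrt (real q ^ n) = 2 ^ r * (\<theta> * (X * sqrt (real q ^ n)))"
    unfolding X_def using \<theta> by simp
  also have "\<dots> < 2 ^ r * (\<theta> * B ^ s)" using XB \<theta> by simp
  also have "B = real q * a" using q unfolding B_def a_def by (simp add: field_simps)
  also have "(real q * a) ^ s = real q ^ s * a ^ s" by (rule power_mult_distrib)
  also have "a ^ s \<le> a ^ r"
    unfolding a_def by (intro power_decreasing \<open>r \<le> s\<close>) (use q in \<open>simp_all add: field_simps\<close>)
  also have "2 ^ r * (\<theta> * (real q ^ s * a ^ r)) = \<theta> * real q ^ s * (1 - 1 / real q) ^ r"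
    unfolding a_def by (simp add: power_divide)
  finally show ?thesis using \<theta> q by (simp add: mult_left_mono)
qed

section \<open>Character sums over additive subgroups\<close>

locale finite_field_generator =
  fixes g :: "'a::{field,finite}"
  assumes primitive: "primitive_elem g"
begin

definition unit_card :: nat where
  "unit_card = card (UNIV :: 'a set) - 1"

lemma card_nonzero: "card (UNIV - {0::'a}) = unit_card"
  unfolding unit_card_def by (simp add: card_Diff_singleton)

lemma unit_card_pos: "unit_card > 0"
proof -
  have "card {0::'a, 1} \<le> card (UNIV :: 'a set)" by (rule card_mono) simp_all
  then show ?thesis unfolding unit_card_def by simp
qed

lemma g_nonzero: "g \<noteq> 0" and g_generates: "x \<noteq> 0 \<Longrightarrow> \<exists>i. x = g ^ i"
  using primitive unfolding primitive_elem_def by blast+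

lemma g_pow_unit_card: "g ^ unit_card = 1"
proof -
  have "g ^ card (UNIV :: 'a set) = g" by (rule pow_card_eq_self) simp_all
  then have "g * g ^ unit_card = g * 1"
    using unit_card_pos unfolding unit_card_def by (simp flip: power_Suc)
  then show ?thesis using g_nonzero by simp
qed

lemma g_pow_mod: "g ^ i = g ^ (i mod unit_card)"
proof -
  have "g ^ i = g ^ (i mod unit_card) * (g ^ unit_card) ^ (i div unit_card)"
    by (metis div_mult_mod_eq power_add power_mult add.commute mult.commute)
  then show ?thesis by (simp add: g_pow_unit_card)
qed

lemma bij_betw_g_pow: "bij_betw (\<lambda>i. g ^ i) {..<unit_card} (UNIV - {0})"
proof -
  have image: "(\<lambda>i. g ^ i) ` {..<unit_card} = UNIV - {0}"
  proof
    show "(\<lambda>i. g ^ i) ` {..<unit_card} \<subseteq> UNIV - {0}" using g_nonzero by auto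
    show "UNIV - {0} \<subseteq> (\<lambda>i. g ^ i) ` {..<unit_card}"
    proof
      fix x :: 'a assume "x \<in> UNIV - {0}"
      then obtain i where "x = g ^ (i mod unit_card)" using g_generates g_pow_mod by blast
      then show "x \<in> (\<lambda>i. g ^ i) ` {..<unit_card}" using unit_card_pos by auto
    qed
  qed
  then have "inj_on (\<lambda>i. g ^ i) {..<unit_card}"
    by (simp add: inj_on_iff_eq_card card_nonzero)
  then show ?thesis using image by (simp add: bij_betw_def)
qed

lemma g_pow_eq_iff: "g ^ i = g ^ j \<longleftrightarrow> i mod unit_card = j mod unit_card"
proof -
  have "g ^ (i mod unit_card) = g ^ (j mod unit_card) \<longleftrightarrow> i mod unit_card = j mod unit_card"
    using bij_betw_g_pow unit_card_pos unfolding bij_betw_def inj_on_def by auto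
  then show ?thesis by (metis g_pow_mod)
qed

definition dlog :: "'a \<Rightarrow> nat" where
  "dlog x = (THE i. i < unit_card \<and> g ^ i = x)"

lemma dlog: assumes "x \<noteq> 0" shows "dlog x < unit_card" and "g ^ dlog x = x"
proof -
  obtain i where "x = g ^ i" using g_generates assms by blast
  then have i: "i mod unit_card < unit_card \<and> g ^ (i mod unit_card) = x"
    using g_pow_mod unit_card_pos by simp
  have "\<exists>!j. j < unit_card \<and> g ^ j = x"
  proof (rule ex1I[of _ "i mod unit_card"])
    fix j assume "j < unit_card \<and> g ^ j = x"
    then show "j = i mod unit_card" using i g_pow_eq_iff[of j "i mod unit_card"] by simp
  qed (rule i)
  then have "dlog x < unit_card \<and> g ^ dlog x = x" unfolding dlog_def by (rule theI')
  then show "dlog x < unit_card" and "g ^ dlog x = x" by blast+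
qed

lemma dlog_g_pow: "dlog (g ^ i) = i mod unit_card"
  using dlog[of "g ^ i"] g_nonzero g_pow_eq_iff[of "dlog (g ^ i)" i] by simp

text \<open>The multiplicative characters are \<open>chi t\<close> for \<open>t < unit_card\<close>, extended by \<open>chi t 0 = 0\<close>.\<close>
definition zeta :: complex where
  "zeta = cis (2 * pi / real unit_card)"

definition chi :: "nat \<Rightarrow> 'a \<Rightarrow> complex" where
  "chi t x = (if x = 0 then 0 else zeta ^ (t * dlog x))"

lemma zeta_pow: "zeta ^ k = cis (2 * pi * real k / real unit_card)"
  unfolding zeta_def by (simp add: DeMoivre mult.commute)

lemma zeta_pow_unit_card: "zeta ^ unit_card = 1"
  unfolding zeta_pow using unit_card_pos by (simp add: complex_eq_iff)

lemma zeta_pow_mod: "zeta ^ k = zeta ^ (k mod unit_card)"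
  by (metis zeta_pow_unit_card div_mult_mod_eq power_add power_mult power_one mult_1 add.commute mult.commute)

lemma zeta_pow_eq_1_iff: "zeta ^ k = 1 \<longleftrightarrow> unit_card dvd k"
proof -
  have inj: "inj_on (\<lambda>k. cis (2 * pi * real k / real unit_card)) {..<unit_card}"
    using bij_betw_roots_unity[OF unit_card_pos] unfolding bij_betw_def by blast
  have "zeta ^ (k mod unit_card) = 1 \<longleftrightarrow> k mod unit_card = 0"
  proof
    assume "zeta ^ (k mod unit_card) = 1"
    then have "cis (2 * pi * real (k mod unit_card) / real unit_card) = cis (2 * pi * real 0 / real unit_card)"
      unfolding zeta_pow by simp
    then show "k mod unit_card = 0" by (rule inj_onD[OF inj]) (use unit_card_pos in auto)
  qed simp
  then show ?thesis by (simp flip: zeta_pow_mod add: dvd_eq_mod_eq_0)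
qed

lemma norm_zeta_pow [simp]: "norm (zeta ^ k) = 1"
  unfolding zeta_pow by simp

lemma chi_0 [simp]: "chi t 0 = 0"
  unfolding chi_def by simp

lemma chi_g_pow: "chi t (g ^ i) = zeta ^ (t * i)"
  using g_nonzero unfolding chi_def dlog_g_pow
  by (simp add: zeta_pow_mod[of "t * (i mod unit_card)"] zeta_pow_mod[of "t * i"] mod_mult_right_eq)

lemma chi_mult: "x \<noteq> 0 \<Longrightarrow> y \<noteq> 0 \<Longrightarrow> chi t (x * y) = chi t x * chi t y"
  using g_generates[of x] g_generates[of y]
  by (auto simp: power_add[symmetric] chi_g_pow distrib_left)

lemma chi_trivial: "x \<noteq> 0 \<Longrightarrow> chi 0 x = 1"
  unfolding chi_def by simp

lemma norm_chi: "x \<noteq> 0 \<Longrightarrow> norm (chi t x) = 1"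
  unfolding chi_def by simp

lemma chi_mult_cnj: assumes "x \<noteq> 0" shows "chi t x * cnj (chi t x) = 1"
proof -
  have "complex_of_real ((norm (chi t x))\<^sup>2) = 1" using norm_chi[OF assms] by simp
  then show ?thesis by (simp only: complex_norm_square)
qed

lemma cnj_chi: assumes "x \<noteq> 0" shows "cnj (chi t x) = chi t (inverse x)"
proof -
  have "chi t x * chi t (inverse x) = 1"
    using chi_mult[of x "inverse x" t] assms chi_g_pow[of t 0] by simp
  then show ?thesis using chi_mult_cnj[OF assms, of t]
    by (metis mult.left_commute mult.right_neutral mult.commute)
qed

lemma sum_chi: assumes "\<not> unit_card dvd t" shows "(\<Sum>x\<in>UNIV. chi t x) = 0"
proof -
  have ne: "zeta ^ t \<noteq> 1" using zeta_pow_eq_1_iff assms by simp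
  have "(\<Sum>x\<in>UNIV. chi t x) = (\<Sum>x\<in>UNIV - {0}. chi t x)"
    by (rule sum.mono_neutral_right) auto
  also have "\<dots> = (\<Sum>i<unit_card. (zeta ^ t) ^ i)"
    by (simp add: sum.reindex_bij_betw[OF bij_betw_g_pow, symmetric] chi_g_pow power_mult)
  also have "\<dots> = ((zeta ^ t) ^ unit_card - 1) / (zeta ^ t - 1)" by (rule geometric_sum[OF ne])
  also have "(zeta ^ t) ^ unit_card = (zeta ^ unit_card) ^ t" by (simp flip: power_mult add: mult.commute)
  finally show ?thesis by (simp add: zeta_pow_unit_card)
qed

lemma sum_chi_mult_cnj_shift:
  assumes c: "c \<noteq> 0" and t: "\<not> unit_card dvd t"
  shows "(\<Sum>a\<in>UNIV. chi t a * cnj (chi t (a + c))) = -1"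
proof -
  let ?A = "UNIV - {0, -c}"
  let ?B = "UNIV - {0, 1::'a}"
  have "(\<Sum>a\<in>UNIV. chi t a * cnj (chi t (a + c))) = (\<Sum>a\<in>?A. chi t a * cnj (chi t (a + c)))"
    by (rule sum.mono_neutral_right) auto
  also have "\<dots> = (\<Sum>a\<in>?A. chi t (a / (a + c)))"
  proof (rule sum.cong[OF refl])
    fix a assume "a \<in> ?A"
    then have "a \<noteq> 0" "a + c \<noteq> 0" by (auto simp: add_eq_0_iff)
    then show "chi t a * cnj (chi t (a + c)) = chi t (a / (a + c))"
      by (simp add: cnj_chi chi_mult divide_inverse)
  qed
  also have "\<dots> = (\<Sum>z\<in>?B. chi t z)"
  proof (rule sum.reindex_bij_witness[where i="\<lambda>z. c * z / (1 - z)" and j="\<lambda>a. a / (a + c)"])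
    fix a assume a: "a \<in> ?A"
    then have ac: "a + c \<noteq> 0" by (auto simp: add_eq_0_iff)
    then have "1 - a / (a + c) = c / (a + c)" by (simp add: field_simps)
    then show "c * (a / (a + c)) / (1 - a / (a + c)) = a" using ac c by simp
    show "a / (a + c) \<in> ?B" using a ac c by (auto simp: field_simps)
  next
    fix z assume z: "z \<in> ?B"
    then have "1 - z \<noteq> 0" by auto
    then show "c * z / (1 - z) / (c * z / (1 - z) + c) = z" and "c * z / (1 - z) \<in> ?A"
      using z c by (auto simp: field_simps)
  qed simp
  also have "\<dots> = (\<Sum>z\<in>UNIV. chi t z) - chi t 0 - chi t 1"
    using sum.subset_diff[of "{0, 1}" UNIV "chi t"] by simp
  also have "\<dots> = -1" using sum_chi[OF t] chi_g_pow[of t 0] by simp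
  finally show ?thesis .
qed

lemma sum_chi_translate_mult_cnj:
  assumes "\<not> unit_card dvd t"
  shows "(\<Sum>a\<in>UNIV. chi t (x + a) * cnj (chi t (y + a))) = (if x = y then of_nat unit_card else -1)"
proof -
  have "(\<Sum>a\<in>UNIV. chi t (x + a) * cnj (chi t (y + a))) = (\<Sum>b\<in>UNIV. chi t b * cnj (chi t (b + (y - x))))"
    by (rule sum.reindex_bij_witness[where i="\<lambda>b. b - x" and j="\<lambda>a. x + a"]) (simp_all add: algebra_simps)
  also have "\<dots> = (if x = y then of_nat unit_card else -1)"
  proof (cases "x = y")
    case True
    have "(\<Sum>b\<in>UNIV. chi t b * cnj (chi t b)) = (\<Sum>b\<in>UNIV - {0}. chi t b * cnj (chi t b))"
      by (rule sum.mono_neutral_right) auto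
    also have "\<dots> = of_nat (card (UNIV - {0::'a}))" by (simp add: chi_mult_cnj)
    finally show ?thesis using True card_nonzero by simp
  qed (simp add: sum_chi_mult_cnj_shift assms)
  finally show ?thesis .
qed

lemma sum_norm_translated_sum_chi_sq:
  assumes "\<not> unit_card dvd t"
  shows "(\<Sum>a\<in>UNIV. (norm (\<Sum>x\<in>U. chi t (x + a)))\<^sup>2) = real (card U) * (real unit_card + 1 - real (card U))"
proof -
  have "complex_of_real (\<Sum>a\<in>UNIV. (norm (\<Sum>x\<in>U. chi t (x + a)))\<^sup>2)
      = (\<Sum>a\<in>UNIV. (\<Sum>x\<in>U. chi t (x + a)) * cnj (\<Sum>y\<in>U. chi t (y + a)))"
    by (simp only: of_real_sum complex_norm_square)
  also have "\<dots> = (\<Sum>x\<in>U. \<Sum>y\<in>U. \<Sum>a\<in>UNIV. chi t (x + a) * cnj (chi t (y + a)))"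
    by (simp add: sum_product sum.swap[of _ UNIV] sum.swap[of _ UNIV U])
  also have "\<dots> = (\<Sum>x\<in>U. \<Sum>y\<in>U. (if y = x then of_nat unit_card + 1 else 0) - 1)"
    by (intro sum.cong refl) (auto simp: sum_chi_translate_mult_cnj assms)
  also have "\<dots> = complex_of_real (real (card U) * (real unit_card + 1 - real (card U)))"
    by (simp add: sum_subtractf sum.delta')
  finally show ?thesis by (simp only: of_real_eq_iff)
qed

text \<open>Since the translates of the sum by elements of \<open>U\<close> all coincide, the mean-square identity
  above bounds the sum itself.\<close>
lemma norm_sum_chi_additive_subgroup_le:
  assumes U: "additive_subgroup U" and t: "\<not> unit_card dvd t"
  shows "norm (\<Sum>x\<in>U. chi t x) \<le> sqrt (real (card (UNIV :: 'a set)))"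
proof -
  define f where "f a = (\<Sum>x\<in>U. chi t (x + a))" for a
  have translate: "f a = f 0" if "a \<in> U" for a
    unfolding f_def
    by (rule sum.reindex_bij_witness[where i="\<lambda>y. y - a" and j="\<lambda>x. x + a"])
       (use that additive_subgroupD[OF U] in auto)
  have "card U > 0" using additive_subgroupD(1)[OF U] by (auto simp: card_gt_0_iff)
  have "real (card U) * (norm (f 0))\<^sup>2 = (\<Sum>a\<in>U. (norm (f a))\<^sup>2)" using translate by simp
  also have "\<dots> \<le> (\<Sum>a\<in>UNIV. (norm (f a))\<^sup>2)" by (rule sum_mono2) simp_all
  also have "\<dots> = real (card U) * (real unit_card + 1 - real (card U))"
    unfolding f_def by (rule sum_norm_translated_sum_chi_sq[OF t])
  also have "\<dots> \<le> real (card U) * real (card (UNIV :: 'a set))"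
    using unit_card_pos unfolding unit_card_def by (intro mult_left_mono) (simp_all add: of_nat_diff)
  finally have "(norm (f 0))\<^sup>2 \<le> real (card (UNIV :: 'a set))"
    using \<open>card U > 0\<close> by simp
  then show ?thesis unfolding f_def by (simp add: real_le_rsqrt)
qed

lemma primitive_elem_iff_coprime_dlog:
  assumes "x \<noteq> 0"
  shows "primitive_elem x \<longleftrightarrow> coprime (dlog x) unit_card"
proof -
  have x: "x = g ^ dlog x" using dlog(2)[OF assms] by simp
  have "primitive_elem x \<longleftrightarrow> (\<exists>j. g = x ^ j)"
  proof
    assume "\<exists>j. g = x ^ j"
    then obtain j where j: "g = x ^ j" by blast
    show "primitive_elem x"
      unfolding primitive_elem_def
      using assms g_generates by (metis j power_mult[symmetric])
  qed (use g_nonzero in \<open>auto simp: primitive_elem_def\<close>)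
  also have "\<dots> \<longleftrightarrow> (\<exists>j. [dlog x * j = Suc 0] (mod unit_card))"
    by (subst x) (simp add: power_mult[symmetric] g_pow_eq_iff[of 1, simplified] cong_def eq_commute)
  also have "\<dots> \<longleftrightarrow> coprime (dlog x) unit_card"
    by (rule coprime_iff_invertible_nat[symmetric])
  finally show ?thesis .
qed

lemma of_bool_dvd_eq_sum_zeta:
  assumes "d dvd unit_card"
  shows "(of_bool (d dvd j) :: complex) = (\<Sum>u<d. zeta ^ (unit_card div d * u * j)) / of_nat d"
proof -
  define e where "e = unit_card div d"
  have ed: "unit_card = d * e" using assms unfolding e_def by simp
  then have "d > 0" "e > 0" using unit_card_pos by auto
  define z where "z = zeta ^ (e * j)"
  have sum: "(\<Sum>u<d. zeta ^ (e * u * j)) = (\<Sum>u<d. z ^ u)"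
    unfolding z_def by (simp add: power_mult[symmetric] mult_ac)
  have z_eq_1: "z = 1 \<longleftrightarrow> d dvd j"
    unfolding z_def zeta_pow_eq_1_iff ed using \<open>e > 0\<close> by (simp add: mult.commute)
  show ?thesis
  proof (cases "d dvd j")
    case True
    then show ?thesis using z_eq_1 \<open>d > 0\<close> unfolding e_def[symmetric] sum by simp
  next
    case False
    have "z ^ d = 1" unfolding z_def ed
      by (metis zeta_pow_unit_card ed power_mult power_one mult.commute mult.left_commute)
    then have "(\<Sum>u<d. z ^ u) = 0" using False z_eq_1 by (simp add: geometric_sum)
    then show ?thesis using False unfolding e_def[symmetric] sum by simp
  qed
qed

text \<open>Vinogradov's formula for the characteristic function of the primitive elements (at \<open>x = 0\<close>
  both sides vanish).\<close>
lemma of_bool_primitive_elem_eq: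
  "(of_bool (primitive_elem x) :: complex) =
    (\<Sum>S\<in>Pow (prime_factors unit_card). (-1) ^ card S / of_nat (\<Prod>S) *
       (\<Sum>u<\<Prod>S. chi (unit_card div \<Prod>S * u) x))"
proof (cases "x = 0")
  case True
  then show ?thesis by (simp add: primitive_elem_def)
next
  case False
  have "(of_bool (primitive_elem x) :: complex) = of_bool (\<forall>p\<in>prime_factors unit_card. \<not> p dvd dlog x)"
    using primitive_elem_iff_coprime_dlog[OF False] coprime_iff_prime_factors[OF unit_card_pos] by simp
  also have "\<dots> = (\<Sum>S\<in>Pow (prime_factors unit_card). (-1) ^ card S * of_bool (\<forall>p\<in>S. p dvd dlog x))"
    by (rule of_bool_ball_not_eq_sum_Pow) simp
  also have "\<dots> = (\<Sum>S\<in>Pow (prime_factors unit_card). (-1) ^ card S / of_nat (\<Prod>S) *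
       (\<Sum>u<\<Prod>S. chi (unit_card div \<Prod>S * u) x))"
  proof (rule sum.cong[OF refl])
    fix S assume S: "S \<in> Pow (prime_factors unit_card)"
    then have "finite S" and primes: "\<And>p. p \<in> S \<Longrightarrow> prime p"
      by (auto intro: finite_subset)
    then have "(\<forall>p\<in>S. p dvd dlog x) \<longleftrightarrow> \<Prod>S dvd dlog x" by (simp add: prod_primes_dvd_iff)
    moreover have "\<Prod>S dvd unit_card" using S by (simp add: prod_prime_factors_subset_dvd)
    ultimately show "(-1) ^ card S * of_bool (\<forall>p\<in>S. p dvd dlog x) = (-1) ^ card S / of_nat (\<Prod>S) *
        (\<Sum>u<\<Prod>S. chi (unit_card div \<Prod>S * u) x)"
      using False by (simp add: of_bool_dvd_eq_sum_zeta chi_def)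
  qed
  finally show ?thesis .
qed

lemma sum_chi_trivial:
  assumes "0 \<in> U"
  shows "(\<Sum>x\<in>U. chi 0 x) = of_nat (card U) - 1"
proof -
  have "(\<Sum>x\<in>U. chi 0 x) = (\<Sum>x\<in>U - {0}. 1)"
    by (rule sum.mono_neutral_cong_right) (auto simp: chi_trivial)
  moreover have "card U > 0" using assms by (auto simp: card_gt_0_iff)
  ultimately show ?thesis using assms by (simp add: card_Diff_singleton of_nat_diff Suc_le_eq)
qed

lemma norm_sum_nontrivial_sum_chi_le:
  assumes U: "additive_subgroup U" and d: "d dvd unit_card"
  shows "norm (\<Sum>u\<in>{1..<d}. \<Sum>x\<in>U. chi (unit_card div d * u) x)
    \<le> real (d - 1) * sqrt (real (card (UNIV :: 'a set)))"
proof -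
  have bound: "norm (\<Sum>x\<in>U. chi (unit_card div d * u) x) \<le> sqrt (real (card (UNIV :: 'a set)))"
    if "u \<in> {1..<d}" for u
  proof (rule norm_sum_chi_additive_subgroup_le[OF U])
    define e where "e = unit_card div d"
    have ed: "unit_card = d * e" using d unfolding e_def by simp
    then have "e > 0" using unit_card_pos by auto
    show "\<not> unit_card dvd unit_card div d * u"
    proof
      assume "unit_card dvd unit_card div d * u"
      then have "d * e dvd u * e" unfolding e_def[symmetric] by (metis ed mult.commute)
      then have "d dvd u" using \<open>e > 0\<close> by simp
      then show False using that by (auto dest: dvd_imp_le)
    qed
  qed
  then have "(\<Sum>u\<in>{1..<d}. norm (\<Sum>x\<in>U. chi (unit_card div d * u) x))
      \<le> (\<Sum>u\<in>{1..<d}. sqrt (real (card (UNIV :: 'a set))))"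
    by (rule sum_mono)
  then show ?thesis by (auto intro: order_trans[OF norm_sum])
qed

lemma norm_weighted_nontrivial_sum_chi_le:
  fixes U :: "'a set"
  assumes U: "additive_subgroup U" and S: "S \<subseteq> prime_factors unit_card"
  shows "norm ((-1) ^ card S / of_nat (\<Prod>S) * (\<Sum>u\<in>{1..<\<Prod>S}. \<Sum>x\<in>U. chi (unit_card div \<Prod>S * u) x))
    \<le> sqrt (real (card (UNIV :: 'a set)))" (is "norm (_ * ?err) \<le> ?r")
proof -
  have dvd: "\<Prod>S dvd unit_card" using S by (rule prod_prime_factors_subset_dvd)
  then have "\<Prod>S > 0" using unit_card_pos by (auto intro: dvd_pos_nat)
  have "norm ((-1) ^ card S / of_nat (\<Prod>S) * ?err) = norm ?err / real (\<Prod>S)"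
    by (simp add: norm_mult norm_divide norm_power del: of_nat_prod)
  also have "\<dots> \<le> real (\<Prod>S - 1) * ?r / real (\<Prod>S)"
    by (intro divide_right_mono norm_sum_nontrivial_sum_chi_le U dvd) (simp del: of_nat_prod)
  also have "\<dots> \<le> real (\<Prod>S) * ?r / real (\<Prod>S)"
    by (intro divide_right_mono mult_right_mono) (simp_all del: of_nat_prod)
  also have "\<dots> = ?r" using \<open>\<Prod>S > 0\<close> by (simp del: of_nat_prod)
  finally show ?thesis .
qed

text \<open>The trivial character gives the main term, the characters of order \<open>d > 1\<close> the error.\<close>
lemma abs_card_primitive_additive_subgroup_le:
  fixes U :: "'a set"
  assumes U: "additive_subgroup U"
  shows "\<bar>real (card {x\<in>U. primitive_elem x}) - coprime_density unit_card * (real (card U) - 1)\<bar>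
    \<le> 2 ^ card (prime_factors unit_card) * sqrt (real (card (UNIV :: 'a set)))"
proof -
  let ?P = "prime_factors unit_card" and ?r = "sqrt (real (card (UNIV :: 'a set)))"
  let ?c = "\<lambda>S. (-1) ^ card S / of_nat (\<Prod>S) :: complex"
  let ?err = "\<lambda>S. \<Sum>u\<in>{1..<\<Prod>S}. \<Sum>x\<in>U. chi (unit_card div \<Prod>S * u) x"
  have pos: "\<Prod>S > 0" if "S \<in> Pow ?P" for S
    using that prod_prime_factors_subset_dvd[of S unit_card] unit_card_pos by (auto intro: dvd_pos_nat)
  have "of_nat (card {x\<in>U. primitive_elem x}) = (\<Sum>x\<in>U. (of_bool (primitive_elem x) :: complex))"
    by (simp add: Collect_conj_eq Int_commute)
  also have "\<dots> = (\<Sum>S\<in>Pow ?P. ?c S * (\<Sum>u<\<Prod>S. \<Sum>x\<in>U. chi (unit_card div \<Prod>S * u) x))"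
    by (simp add: of_bool_primitive_elem_eq sum_distrib_left sum.swap[of _ U])
  also have "\<dots> = (\<Sum>S\<in>Pow ?P. ?c S * ((\<Sum>x\<in>U. chi 0 x) + ?err S))"
    by (intro sum.cong refl) (simp add: pos lessThan_atLeast0 sum.atLeast_Suc_lessThan)
  also have "\<dots> = (\<Sum>S\<in>Pow ?P. ?c S) * (of_nat (card U) - 1) + (\<Sum>S\<in>Pow ?P. ?c S * ?err S)"
    using additive_subgroupD(1)[OF U]
    by (simp add: sum_chi_trivial distrib_left sum.distrib sum_distrib_right)
  also have "(\<Sum>S\<in>Pow ?P. ?c S) = of_real (coprime_density unit_card)"
    by (simp flip: sum_Pow_prime_factors_eq_coprime_density)
  finally have "complex_of_real (real (card {x\<in>U. primitive_elem x}) - coprime_density unit_card * (real (card U) - 1))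
      = (\<Sum>S\<in>Pow ?P. ?c S * ?err S)" by simp
  then have "\<bar>real (card {x\<in>U. primitive_elem x}) - coprime_density unit_card * (real (card U) - 1)\<bar>
      = norm (\<Sum>S\<in>Pow ?P. ?c S * ?err S)"
    by (subst norm_of_real[where 'a=complex, symmetric]) (simp only:)
  also have "\<dots> \<le> (\<Sum>S\<in>Pow ?P. ?r)"
    by (rule order_trans[OF norm_sum sum_mono]) (use norm_weighted_nontrivial_sum_chi_le[OF U] in auto)
  also have "\<dots> = 2 ^ card ?P * ?r" by (simp add: card_Pow)
  finally show ?thesis .
qed

end

section \<open>Spans of conjugates\<close>

locale fixed_subfield =
  fixes F :: "'a::field set"
  assumes subfield: "is_subfield F"
begin

lemma zero_mem: "0 \<in> F" and one_mem: "1 \<in> F"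
  and add_mem: "x \<in> F \<Longrightarrow> y \<in> F \<Longrightarrow> x + y \<in> F"
  and mult_mem: "x \<in> F \<Longrightarrow> y \<in> F \<Longrightarrow> x * y \<in> F"
  and uminus_mem: "x \<in> F \<Longrightarrow> - x \<in> F"
  and inverse_mem: "x \<in> F \<Longrightarrow> x \<noteq> 0 \<Longrightarrow> inverse x \<in> F"
  using subfield unfolding is_subfield_def by auto

lemma diff_mem: "x \<in> F \<Longrightarrow> y \<in> F \<Longrightarrow> x - y \<in> F"
  using add_mem[of x "- y"] uminus_mem[of y] by simp

lemma Fspan_zero: "0 \<in> Fspan F v I"
  unfolding Fspan_def by (auto intro!: exI[of _ "\<lambda>_. 0"] zero_mem)

lemma Fspan_add:
  assumes "x \<in> Fspan F v I" and "y \<in> Fspan F v I"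
  shows "x + y \<in> Fspan F v I"
proof -
  obtain c d where "\<forall>i\<in>I. c i \<in> F" "x = (\<Sum>i\<in>I. c i * v i)"
    and "\<forall>i\<in>I. d i \<in> F" "y = (\<Sum>i\<in>I. d i * v i)"
    using assms unfolding Fspan_def by auto
  then show ?thesis unfolding Fspan_def
    by (auto intro!: exI[of _ "\<lambda>i. c i + d i"] add_mem simp: sum.distrib distrib_right)
qed

lemma Fspan_smult:
  assumes "a \<in> F" and "x \<in> Fspan F v I"
  shows "a * x \<in> Fspan F v I"
proof -
  obtain c where "\<forall>i\<in>I. c i \<in> F" "x = (\<Sum>i\<in>I. c i * v i)"
    using assms unfolding Fspan_def by auto
  then show ?thesis unfolding Fspan_def using assms(1)
    by (auto intro!: exI[of _ "\<lambda>i. a * c i"] mult_mem simp: sum_distrib_left mult.assoc)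
qed

lemma Fspan_uminus: "x \<in> Fspan F v I \<Longrightarrow> - x \<in> Fspan F v I"
  using Fspan_smult[of "- 1" x v I] uminus_mem[OF one_mem] by simp

lemma Fspan_sum: "(\<And>a. a \<in> A \<Longrightarrow> f a \<in> Fspan F v I) \<Longrightarrow> sum f A \<in> Fspan F v I"
  by (induct A rule: infinite_finite_induct) (auto intro: Fspan_zero Fspan_add)

lemma Fspan_generator:
  assumes "finite I" and "j \<in> I"
  shows "v j \<in> Fspan F v I"
proof -
  have "(\<Sum>i\<in>I. (if i = j then 1 else 0) * v i) = (\<Sum>i\<in>I. if i = j then v i else 0)"
    by (rule sum.cong) auto
  also have "\<dots> = v j" using assms by (simp add: sum.delta)
  finally show ?thesis unfolding Fspan_def
    by (auto intro!: exI[of _ "\<lambda>i. if i = j then 1 else 0"] simp: zero_mem one_mem)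
qed

lemma Fspan_subset:
  "finite I \<Longrightarrow> (\<And>i. i \<in> I \<Longrightarrow> v i \<in> Fspan F w J) \<Longrightarrow> Fspan F v I \<subseteq> Fspan F w J"
  unfolding Fspan_def[of F v I] by (auto intro!: Fspan_sum Fspan_smult)

lemma card_Fspan_Findep:
  assumes "finite I" and "Findep F v I"
  shows "card (Fspan F v I) = card F ^ card I"
proof -
  let ?E = "PiE I (\<lambda>_. F)" and ?f = "\<lambda>c. \<Sum>i\<in>I. c i * v i"
  have "Fspan F v I = ?f ` ?E"
  proof (intro equalityI subsetI)
    fix x assume "x \<in> Fspan F v I"
    then obtain c where c: "\<forall>i\<in>I. c i \<in> F" "x = ?f c" unfolding Fspan_def by auto
    then have "x = ?f (restrict c I)" by simp
    moreover have "restrict c I \<in> ?E" using c by simp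
    ultimately show "x \<in> ?f ` ?E" by (rule image_eqI)
  qed (auto simp: Fspan_def PiE_iff)
  moreover have "inj_on ?f ?E"
  proof
    fix c d assume c: "c \<in> ?E" and d: "d \<in> ?E" and "?f c = ?f d"
    then have "(\<Sum>i\<in>I. (c i - d i) * v i) = 0"
      by (simp add: left_diff_distrib sum_subtractf)
    moreover have "\<forall>i\<in>I. c i - d i \<in> F" using c d by (auto simp: PiE_iff intro!: diff_mem)
    ultimately have "\<forall>i\<in>I. c i - d i = 0"
      using assms(2)[unfolded Findep_def, rule_format, of "\<lambda>i. c i - d i"] by blast
    then show "c = d" by (intro PiE_ext[OF c d]) simp
  qed
  ultimately show ?thesis using assms(1) by (simp add: card_image card_PiE)
qed

lemma Fspan_remove:
  assumes "finite I" and "j \<in> I" and "v j \<in> Fspan F v (I - {j})"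
  shows "Fspan F v (I - {j}) = Fspan F v I"
proof
  show "Fspan F v (I - {j}) \<subseteq> Fspan F v I"
    using assms by (intro Fspan_subset) (auto intro: Fspan_generator)
  show "Fspan F v I \<subseteq> Fspan F v (I - {j})"
    using assms by (intro Fspan_subset) (auto intro: Fspan_generator)
qed

lemma exists_Findep_subset:
  "finite I \<Longrightarrow> \<exists>B\<subseteq>I. Findep F v B \<and> Fspan F v B = Fspan F v I"
proof (induct "card I" arbitrary: I rule: less_induct)
  case less
  show ?case
  proof (cases "Findep F v I")
    case False
    then obtain c j where c: "\<forall>i\<in>I. c i \<in> F" "(\<Sum>i\<in>I. c i * v i) = 0" and j: "j \<in> I" "c j \<noteq> 0"
      unfolding Findep_def by blast
    have "c j * v j = - (\<Sum>i\<in>I - {j}. c i * v i)"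
      using c(2) less.prems j by (simp add: sum.remove add_eq_0_iff)
    then have "v j = - inverse (c j) * (\<Sum>i\<in>I - {j}. c i * v i)"
      using j(2) by (simp add: field_simps)
    then have "v j = (\<Sum>i\<in>I - {j}. (- inverse (c j) * c i) * v i)"
      by (simp add: sum_distrib_left mult.assoc)
    moreover have "\<forall>i\<in>I - {j}. - inverse (c j) * c i \<in> F"
      using c j by (auto intro!: mult_mem uminus_mem inverse_mem)
    ultimately have "v j \<in> Fspan F v (I - {j})"
      unfolding Fspan_def by (intro CollectI exI[of _ "\<lambda>i. - inverse (c j) * c i"]) simp
    then have "Fspan F v (I - {j}) = Fspan F v I" by (rule Fspan_remove[OF less.prems j(1)])
    moreover have "card (I - {j}) < card I" using less.prems j(1) by (rule card_Diff1_less)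
    ultimately show ?thesis using less.hyps[of "I - {j}"] less.prems by blast
  qed blast
qed

end

locale field_extension = fixed_subfield F for F :: "'a::{field,finite} set" +
  fixes q n :: nat
  assumes prime_power: "prime_power q" and n_pos: "n > 0"
    and card_F: "card F = q" and card_UNIV: "card (UNIV :: 'a set) = q ^ n"
begin

lemma q_ge_2: "q \<ge> 2"
proof -
  have "card {0::'a, 1} \<le> card F" using zero_mem one_mem by (intro card_mono) auto
  then show ?thesis using card_F by simp
qed

lemma pow_q_pow_mem: "c \<in> F \<Longrightarrow> c ^ (q ^ i) = c"
proof (induct i)
  case (Suc i)
  have "c ^ q = c" using pow_card_eq_self[OF _ zero_mem mult_mem inverse_mem Suc.prems] card_F by simp
  then show ?case using Suc by (simp add: power_mult mult.commute)
qed simp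

lemma pow_q_pow_n_mult: "(x::'a) ^ (q ^ (n * j)) = x"
proof (induct j)
  case (Suc j)
  have "x ^ (q ^ (n * Suc j)) = (x ^ (q ^ (n * j))) ^ (q ^ n)"
    by (simp add: power_add power_mult[symmetric] mult.commute)
  then show ?case using Suc pow_card_eq_self[of "UNIV :: 'a set"] card_UNIV by simp
qed simp

lemma pow_q_pow_mod: "(x::'a) ^ (q ^ i) = x ^ (q ^ (i mod n))"
proof -
  have "x ^ (q ^ i) = (x ^ (q ^ (n * (i div n)))) ^ (q ^ (i mod n))"
    by (metis div_mult_mod_eq power_add power_mult mult.commute)
  then show ?thesis by (simp add: pow_q_pow_n_mult)
qed

lemma prime_CHAR: "prime CHAR('a)"
  by (intro prime_CHAR_semidom finite_imp_CHAR_pos) simp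

lemma q_eq_CHAR_pow: "\<exists>e. q = CHAR('a) ^ e"
proof -
  obtain p m where p: "prime p" "q = p ^ m" using prime_power unfolding prime_power_def by auto
  note CHAR = prime_CHAR
  have "of_nat q = (0::'a)"
    using of_nat_card_eq_0[OF _ one_mem add_mem uminus_mem] card_F by simp
  then have "CHAR('a) dvd p" using p CHAR of_nat_eq_0_iff_char_dvd prime_dvd_power by blast
  then have "CHAR('a) = p" using p CHAR by (metis prime_nat_iff prime_gt_1_nat less_not_refl)
  then show ?thesis using p by auto
qed

lemma frobenius_add: "((x::'a) + y) ^ (q ^ i) = x ^ (q ^ i) + y ^ (q ^ i)"
proof -
  obtain e where "q = CHAR('a) ^ e" using q_eq_CHAR_pow by auto
  then show ?thesis
    by (intro freshmans_dream'[OF prime_CHAR, of _ "e * i"]) (simp add: power_mult)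
qed

lemma frobenius_sum: "(sum (f :: 'b \<Rightarrow> 'a) A) ^ (q ^ i) = (\<Sum>j\<in>A. f j ^ (q ^ i))"
proof -
  obtain e where "q = CHAR('a) ^ e" using q_eq_CHAR_pow by auto
  then show ?thesis
    by (intro freshmans_dream_sum'[OF prime_CHAR, of _ "e * i"]) (simp add: power_mult)
qed

definition linearized :: "(nat \<Rightarrow> 'a) \<Rightarrow> 'a \<Rightarrow> 'a" where
  "linearized c x = (\<Sum>i<n. c i * x ^ (q ^ i))"

definition F_coeffs :: "(nat \<Rightarrow> 'a) set" where
  "F_coeffs = {c. \<forall>i<n. c i \<in> F}"

definition conj_span :: "'a \<Rightarrow> 'a set" where
  "conj_span b = Fspan F (\<lambda>i. b ^ (q ^ i)) {..<n}"

lemma conj_span_eq: "conj_span b = {linearized c b |c. c \<in> F_coeffs}"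
  unfolding conj_span_def Fspan_def linearized_def F_coeffs_def by auto

lemma linearized_add: "linearized c (x + y) = linearized c x + linearized c y"
  unfolding linearized_def by (simp add: frobenius_add distrib_left sum.distrib)

lemma linearized_0: "linearized c 0 = 0"
  unfolding linearized_def using q_ge_2 by (simp add: power_0_left)

lemma linearized_add_coeffs: "linearized (\<lambda>i. c i + d i) x = linearized c x + linearized d x"
  unfolding linearized_def by (simp add: distrib_right sum.distrib)

lemma linearized_linearized:
  assumes "d \<in> F_coeffs"
  shows "linearized c (linearized d x) = (\<Sum>i<n. \<Sum>j<n. c i * d j * x ^ (q ^ (i + j)))"
proof -
  have "(d j * x ^ (q ^ j)) ^ (q ^ i) = d j * x ^ (q ^ (i + j))" if "j < n" for i j
    using assms that unfolding F_coeffs_def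
    by (simp add: power_mult_distrib pow_q_pow_mem power_add power_mult[symmetric] mult.commute)
  then show ?thesis
    unfolding linearized_def by (simp add: frobenius_sum sum_distrib_left mult.assoc)
qed

lemma linearized_commute:
  assumes "c \<in> F_coeffs" and "d \<in> F_coeffs"
  shows "linearized c (linearized d x) = linearized d (linearized c x)"
  unfolding linearized_linearized[OF assms(1)] linearized_linearized[OF assms(2)]
  by (subst sum.swap) (simp add: mult_ac add.commute)

lemma linearized_mem_conj_span:
  assumes c: "c \<in> F_coeffs" and y: "y \<in> conj_span b"
  shows "linearized c y \<in> conj_span b"
proof -
  obtain d where d: "d \<in> F_coeffs" "y = linearized d b" using y unfolding conj_span_eq by auto
  have "c i * d j * b ^ (q ^ (i + j)) \<in> conj_span b" if "i < n" "j < n" for i j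
  proof -
    have "c i * d j \<in> F" using c d(1) that unfolding F_coeffs_def by (auto intro!: mult_mem)
    moreover have "b ^ (q ^ (i + j)) \<in> conj_span b"
      unfolding conj_span_def pow_q_pow_mod[of b "i + j"] using n_pos by (intro Fspan_generator) simp_all
    ultimately show ?thesis unfolding conj_span_def by (rule Fspan_smult)
  qed
  then show ?thesis
    unfolding d(2) linearized_linearized[OF d(1)] conj_span_def by (auto intro!: Fspan_sum)
qed

definition monomial_coeffs :: "nat \<Rightarrow> 'a \<Rightarrow> nat \<Rightarrow> 'a" where
  "monomial_coeffs k a = (\<lambda>i. if i = k then a else 0)"

lemma monomial_coeffs_mem: "k < n \<Longrightarrow> a \<in> F \<Longrightarrow> monomial_coeffs k a \<in> F_coeffs"
  unfolding monomial_coeffs_def F_coeffs_def using zero_mem by auto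

lemma linearized_monomial_coeffs:
  assumes "k < n"
  shows "linearized (monomial_coeffs k a) x = a * x ^ (q ^ k)"
proof -
  have "linearized (monomial_coeffs k a) x = (\<Sum>i<n. if i = k then a * x ^ (q ^ i) else 0)"
    unfolding linearized_def monomial_coeffs_def by (rule sum.cong) auto
  then show ?thesis using assms by (simp add: sum.delta)
qed

lemma conj_span_self: "b \<in> conj_span b"
  using Fspan_generator[of "{..<n}" 0 "\<lambda>i. b ^ (q ^ i)"] n_pos unfolding conj_span_def by simp

lemma conj_span_subset:
  assumes "y \<in> conj_span b"
  shows "conj_span y \<subseteq> conj_span b"
proof -
  have "y ^ (q ^ i) \<in> conj_span b" if "i < n" for i
  proof -
    have "y ^ (q ^ i) = linearized (monomial_coeffs i 1) y"
      using that by (simp add: linearized_monomial_coeffs)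
    also have "\<dots> \<in> conj_span b"
      using that one_mem assms by (intro linearized_mem_conj_span monomial_coeffs_mem)
    finally show ?thesis .
  qed
  then show ?thesis unfolding conj_span_def by (intro Fspan_subset) auto
qed

lemma k_normal_iff_card_conj_span:
  assumes "k \<le> n"
  shows "k_normal F q n k b \<longleftrightarrow> card (conj_span b) = q ^ (n - k)"
proof
  assume "k_normal F q n k b"
  then obtain B where "B \<subseteq> {..<n}" "card B = n - k" "Findep F (\<lambda>i. b ^ (q ^ i)) B"
      "Fspan F (\<lambda>i. b ^ (q ^ i)) B = conj_span b"
    unfolding k_normal_def conj_span_def by blast
  then show "card (conj_span b) = q ^ (n - k)"
    using card_Fspan_Findep[of B] card_F by (metis finite_lessThan finite_subset)
next
  assume card: "card (conj_span b) = q ^ (n - k)"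
  obtain B where B: "B \<subseteq> {..<n}" "Findep F (\<lambda>i. b ^ (q ^ i)) B"
      "Fspan F (\<lambda>i. b ^ (q ^ i)) B = conj_span b"
    using exists_Findep_subset[of "{..<n}" "\<lambda>i. b ^ (q ^ i)"] unfolding conj_span_def by auto
  then have "q ^ card B = q ^ (n - k)"
    using card card_Fspan_Findep[of B] card_F by (metis finite_lessThan finite_subset)
  then have "card B = n - k" using q_ge_2 by (simp add: power_inject_exp)
  then show "k_normal F q n k b"
    unfolding k_normal_def conj_span_def[symmetric] using assms B by blast
qed

end

section \<open>The span of the conjugates as a ring\<close>

text \<open>\<open>W = conj_span \<alpha>\<close> is a cyclic module over the ring of linearised polynomials. Transporting
  the action via \<open>L(\<alpha>) \<cdot> z = L(z)\<close> makes \<open>W\<close> a commutative ring with unit \<open>\<alpha>\<close> (a copy of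
  \<open>F[X]/(g)\<close>, \<open>g\<close> the \<open>F\<close>-order of \<open>\<alpha>\<close>); its units are exactly the \<open>y \<in> W\<close> with
  \<open>conj_span y = W\<close>.\<close>
locale conj_span_ring = field_extension +
  fixes \<alpha> :: 'a
begin

abbreviation W :: "'a set" where
  "W \<equiv> conj_span \<alpha>"

definition coeffs_of :: "'a \<Rightarrow> nat \<Rightarrow> 'a" where
  "coeffs_of y = (SOME c. c \<in> F_coeffs \<and> linearized c \<alpha> = y)"

definition wmult :: "'a \<Rightarrow> 'a \<Rightarrow> 'a" where
  "wmult y z = linearized (coeffs_of y) z"

lemma coeffs_of:
  assumes "y \<in> W"
  shows "coeffs_of y \<in> F_coeffs \<and> linearized (coeffs_of y) \<alpha> = y"
proof -
  have "\<exists>c. c \<in> F_coeffs \<and> linearized c \<alpha> = y" using assms unfolding conj_span_eq by auto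
  then show ?thesis unfolding coeffs_of_def by (rule someI_ex)
qed

lemma linearized_eq_on_W:
  assumes "c \<in> F_coeffs" "d \<in> F_coeffs" "linearized c \<alpha> = linearized d \<alpha>" "z \<in> W"
  shows "linearized c z = linearized d z"
proof -
  obtain e where e: "e \<in> F_coeffs" "z = linearized e \<alpha>" using assms(4) unfolding conj_span_eq by auto
  then show ?thesis using assms(1-3) by (simp add: linearized_commute[of _ e])
qed

lemma W_add: "x \<in> W \<Longrightarrow> y \<in> W \<Longrightarrow> x + y \<in> W"
  and W_zero: "0 \<in> W"
  and W_uminus: "x \<in> W \<Longrightarrow> - x \<in> W"
  and W_smult: "a \<in> F \<Longrightarrow> x \<in> W \<Longrightarrow> a * x \<in> W"
  unfolding conj_span_def by (auto intro: Fspan_add Fspan_zero Fspan_uminus Fspan_smult)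

lemma wmult_closed: "y \<in> W \<Longrightarrow> z \<in> W \<Longrightarrow> wmult y z \<in> W"
  unfolding wmult_def using coeffs_of linearized_mem_conj_span by blast

lemma wmult_commute: "y \<in> W \<Longrightarrow> z \<in> W \<Longrightarrow> wmult y z = wmult z y"
  unfolding wmult_def using coeffs_of[of y] coeffs_of[of z]
  by (metis linearized_commute)

lemma wmult_assoc:
  assumes y: "y \<in> W" and z: "z \<in> W" and w: "w \<in> W"
  shows "wmult (wmult y z) w = wmult y (wmult z w)"
proof -
  let ?u = "wmult y z"
  obtain e where e: "e \<in> F_coeffs" "w = linearized e \<alpha>" using w unfolding conj_span_eq by auto
  have u: "coeffs_of ?u \<in> F_coeffs" "linearized (coeffs_of ?u) \<alpha> = ?u"
    using coeffs_of[OF wmult_closed[OF y z]] by auto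
  have yz: "coeffs_of y \<in> F_coeffs" "coeffs_of z \<in> F_coeffs" using coeffs_of y z by auto
  have "wmult ?u w = linearized (coeffs_of ?u) (linearized e \<alpha>)" unfolding e(2) wmult_def[of ?u] ..
  also have "\<dots> = linearized e (linearized (coeffs_of ?u) \<alpha>)" by (rule linearized_commute[OF u(1) e(1)])
  also have "\<dots> = linearized e ?u" using u(2) by simp
  also have "\<dots> = linearized e (linearized (coeffs_of y) (linearized (coeffs_of z) \<alpha>))"
    unfolding wmult_def using coeffs_of[OF z] by simp
  also have "\<dots> = linearized (coeffs_of y) (linearized (coeffs_of z) (linearized e \<alpha>))"
    using linearized_commute e(1) yz by metis
  also have "\<dots> = wmult y (wmult z w)" unfolding wmult_def e(2) ..
  finally show ?thesis .
qed

lemma wmult_unit_right: "y \<in> W \<Longrightarrow> wmult y \<alpha> = y"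
  using coeffs_of[of y] by (simp add: wmult_def)

lemma wmult_smult_unit:
  assumes a: "a \<in> F" and z: "z \<in> W"
  shows "wmult (a * \<alpha>) z = a * z"
proof -
  have aw: "a * \<alpha> \<in> W" using W_smult[OF a conj_span_self] .
  have "linearized (coeffs_of (a * \<alpha>)) z = linearized (monomial_coeffs 0 a) z"
  proof (rule linearized_eq_on_W)
    show "coeffs_of (a * \<alpha>) \<in> F_coeffs" using coeffs_of[OF aw] by simp
    show "monomial_coeffs 0 a \<in> F_coeffs" using n_pos a by (rule monomial_coeffs_mem)
    show "linearized (coeffs_of (a * \<alpha>)) \<alpha> = linearized (monomial_coeffs 0 a) \<alpha>"
      using coeffs_of[OF aw] linearized_monomial_coeffs[OF n_pos] by simp
  qed (rule z)
  then show ?thesis unfolding wmult_def using linearized_monomial_coeffs[OF n_pos] by simp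
qed

lemma wmult_unit_left: "z \<in> W \<Longrightarrow> wmult \<alpha> z = z"
  using wmult_smult_unit[OF one_mem] by simp

lemma wmult_add_right: "wmult y (z + w) = wmult y z + wmult y w"
  unfolding wmult_def by (rule linearized_add)

lemma wmult_add_left:
  assumes y: "y \<in> W" and z: "z \<in> W" and w: "w \<in> W"
  shows "wmult (y + z) w = wmult y w + wmult z w"
proof -
  let ?c = "\<lambda>i. coeffs_of y i + coeffs_of z i"
  have "linearized (coeffs_of (y + z)) w = linearized ?c w"
  proof (rule linearized_eq_on_W)
    show "coeffs_of (y + z) \<in> F_coeffs" using coeffs_of[OF W_add[OF y z]] by simp
    show "?c \<in> F_coeffs" using coeffs_of y z unfolding F_coeffs_def by (auto intro!: add_mem)
    show "linearized (coeffs_of (y + z)) \<alpha> = linearized ?c \<alpha>"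
      using coeffs_of[OF W_add[OF y z]] coeffs_of[OF y] coeffs_of[OF z]
      by (simp only: linearized_add_coeffs)
  qed (rule w)
  then show ?thesis unfolding wmult_def by (simp only: linearized_add_coeffs)
qed

lemma wmult_0_right: "wmult y 0 = 0"
  unfolding wmult_def by (rule linearized_0)

definition W_ideal :: "'a set \<Rightarrow> bool" where
  "W_ideal I \<longleftrightarrow> I \<subseteq> W \<and> 0 \<in> I \<and> (\<forall>x\<in>I. \<forall>y\<in>I. x + y \<in> I) \<and> (\<forall>x\<in>I. \<forall>y\<in>W. wmult y x \<in> I)"

definition maximal_W_ideal :: "'a set \<Rightarrow> bool" where
  "maximal_W_ideal M \<longleftrightarrow> W_ideal M \<and> M \<noteq> W \<and> (\<forall>J. W_ideal J \<longrightarrow> M \<subseteq> J \<longrightarrow> J = M \<or> J = W)"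

lemma W_idealD:
  assumes "W_ideal I"
  shows "I \<subseteq> W" "0 \<in> I" "x \<in> I \<Longrightarrow> y \<in> I \<Longrightarrow> x + y \<in> I" "x \<in> I \<Longrightarrow> y \<in> W \<Longrightarrow> wmult y x \<in> I"
  using assms unfolding W_ideal_def by blast+

lemma W_ideal_wmult_right: "W_ideal I \<Longrightarrow> x \<in> I \<Longrightarrow> y \<in> W \<Longrightarrow> wmult x y \<in> I"
  using W_idealD[of I] wmult_commute by (metis subsetD)

lemma additive_subgroup_W_ideal:
  assumes "W_ideal I"
  shows "additive_subgroup I"
proof -
  have "- x \<in> I" if "x \<in> I" for x
  proof -
    have "wmult (- 1 * \<alpha>) x = - x"
      using that W_idealD(1)[OF assms] uminus_mem[OF one_mem] by (subst wmult_smult_unit) auto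
    moreover have "- 1 * \<alpha> \<in> W" using W_uminus[OF conj_span_self] by simp
    ultimately show ?thesis using W_idealD(4)[OF assms that] by metis
  qed
  then show ?thesis using W_idealD[OF assms] unfolding additive_subgroup_def by blast
qed

lemma W_ideal_eq_W: "W_ideal I \<Longrightarrow> \<alpha> \<in> I \<Longrightarrow> I = W"
  using W_idealD[of I] wmult_unit_right by (metis subsetI subset_antisym)

lemma W_ideal_Inter: "(\<And>M. M \<in> T \<Longrightarrow> W_ideal M) \<Longrightarrow> W_ideal (W \<inter> \<Inter>T)"
  unfolding W_ideal_def using W_zero W_add wmult_closed by blast

lemma W_ideal_set_plus:
  assumes I: "W_ideal I" and J: "W_ideal J"
  shows "W_ideal (I + J)"
  unfolding W_ideal_def
proof (intro conjI ballI)
  show "I + J \<subseteq> W" using W_idealD(1)[OF I] W_idealD(1)[OF J] W_add by (auto elim!: set_plus_elim)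
  show "0 \<in> I + J" using W_idealD(2)[OF I] W_idealD(2)[OF J] set_plus_intro by fastforce
next
  fix x y assume "x \<in> I + J" "y \<in> I + J"
  then obtain x1 x2 y1 y2 where "x = x1 + x2" "y = y1 + y2" "x1 \<in> I" "x2 \<in> J" "y1 \<in> I" "y2 \<in> J"
    by (auto elim!: set_plus_elim)
  then have "x + y = (x1 + y1) + (x2 + y2)" by (simp add: ac_simps)
  also have "\<dots> \<in> I + J"
    using \<open>x1 \<in> I\<close> \<open>y1 \<in> I\<close> \<open>x2 \<in> J\<close> \<open>y2 \<in> J\<close> W_idealD(3)[OF I] W_idealD(3)[OF J]
    by (intro set_plus_intro)
  finally show "x + y \<in> I + J" .
next
  fix x y assume "x \<in> I + J" "y \<in> W"
  then obtain x1 x2 where "x = x1 + x2" "x1 \<in> I" "x2 \<in> J" by (auto elim!: set_plus_elim)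
  then have "wmult y x = wmult y x1 + wmult y x2" by (simp add: wmult_add_right)
  also have "\<dots> \<in> I + J"
    using W_idealD(4)[OF I \<open>x1 \<in> I\<close> \<open>y \<in> W\<close>] W_idealD(4)[OF J \<open>x2 \<in> J\<close> \<open>y \<in> W\<close>]
    by (rule set_plus_intro)
  finally show "wmult y x \<in> I + J" .
qed

lemma maximal_W_idealD: "maximal_W_ideal M \<Longrightarrow> W_ideal M"
  unfolding maximal_W_ideal_def by blast

lemma unit_mem_set_plus_maximal_W_ideal:
  assumes M: "maximal_W_ideal M" and I: "W_ideal I" and "\<not> I \<subseteq> M"
  shows "\<alpha> \<in> I + M"
proof -
  have IM: "W_ideal (I + M)" using W_ideal_set_plus[OF I maximal_W_idealD[OF M]] .
  have "M \<subseteq> I + M" using W_idealD(2)[OF I] by (rule set_zero_plus2)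
  moreover have "I \<subseteq> I + M"
    using set_zero_plus2[OF W_idealD(2)[OF maximal_W_idealD[OF M]]] by (simp add: add.commute)
  then have "I + M \<noteq> M" using \<open>\<not> I \<subseteq> M\<close> by blast
  ultimately have "I + M = W" using M IM unfolding maximal_W_ideal_def by blast
  then show ?thesis using conj_span_self by simp
qed

lemma maximal_W_ideal_not_subset:
  assumes "maximal_W_ideal M" "maximal_W_ideal M'" "M \<noteq> M'"
  shows "\<not> M' \<subseteq> M"
  using assms unfolding maximal_W_ideal_def by blast

lemma unit_mem_set_plus_Inter_maximal_W_ideals:
  assumes "finite T" and T: "\<And>M'. M' \<in> T \<Longrightarrow> maximal_W_ideal M'"
    and M: "maximal_W_ideal M" and "M \<notin> T"
  shows "\<alpha> \<in> (W \<inter> \<Inter>T) + M"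
  using assms(1) T \<open>M \<notin> T\<close>
proof (induct T rule: finite_induct)
  case empty
  have "\<alpha> + 0 \<in> W + M"
    using conj_span_self W_idealD(2)[OF maximal_W_idealD[OF M]] by (rule set_plus_intro)
  then show ?case by simp
next
  case (insert M' T)
  have M': "W_ideal M'" and IM: "W_ideal M" using insert.prems(1) M by (auto dest: maximal_W_idealD)
  have "\<alpha> \<in> (W \<inter> \<Inter>T) + M" using insert by blast
  then obtain a1 b1 where ab1: "\<alpha> = a1 + b1" and a1: "a1 \<in> W \<inter> \<Inter>T" and b1: "b1 \<in> M"
    by (rule set_plus_elim)
  have "\<alpha> \<in> M' + M"
    using unit_mem_set_plus_maximal_W_ideal[OF M M'] maximal_W_ideal_not_subset[OF M] insert.prems by blast
  then obtain a2 b2 where ab2: "\<alpha> = a2 + b2" and a2: "a2 \<in> M'" and b2: "b2 \<in> M"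
    by (rule set_plus_elim)
  have W: "a1 \<in> W" "b1 \<in> W" "a2 \<in> W" "b2 \<in> W"
    using a1 b1 a2 b2 W_idealD(1)[OF IM] W_idealD(1)[OF M'] by auto
  \<comment> \<open>multiply the two decompositions of the unit\<close>
  have "\<alpha> = wmult (a1 + b1) (a2 + b2)" using wmult_unit_left[OF conj_span_self] ab1 ab2 by simp
  also have "\<dots> = wmult a1 a2 + (wmult a1 b2 + wmult b1 (a2 + b2))"
    using W by (simp add: wmult_add_left wmult_add_right W_add ac_simps)
  also have "\<dots> \<in> (W \<inter> \<Inter>(insert M' T)) + M"
  proof (rule set_plus_intro)
    have "wmult a1 a2 \<in> X" if "X \<in> T" for X
      using W_ideal_wmult_right[OF maximal_W_idealD[OF insert.prems(1)] _ W(3)] that a1 by blast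
    then show "wmult a1 a2 \<in> W \<inter> \<Inter>(insert M' T)"
      using wmult_closed[OF W(1,3)] W_idealD(4)[OF M' a2 W(1)] by blast
    show "wmult a1 b2 + wmult b1 (a2 + b2) \<in> M"
      using W_idealD(3)[OF IM W_idealD(4)[OF IM b2 W(1)] W_ideal_wmult_right[OF IM b1 W_add[OF W(3,4)]]] .
  qed
  finally show ?case .
qed

lemma card_Inter_maximal_W_ideals:
  assumes "finite T" and "\<And>M. M \<in> T \<Longrightarrow> maximal_W_ideal M"
  shows "card (W \<inter> \<Inter>T) * card W ^ card T = card W * (\<Prod>M\<in>T. card M)"
  using assms
proof (induct T rule: finite_induct)
  case (insert M T)
  let ?I = "W \<inter> \<Inter>T"
  have T: "\<And>X. X \<in> T \<Longrightarrow> maximal_W_ideal X" and M: "maximal_W_ideal M" using insert.prems by blast+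
  have I: "W_ideal ?I" using T by (intro W_ideal_Inter) (auto dest: maximal_W_idealD)
  have "?I + M = W"
    using unit_mem_set_plus_Inter_maximal_W_ideals[OF insert.hyps(1) T M insert.hyps(2)]
      W_ideal_eq_W W_ideal_set_plus[OF I maximal_W_idealD[OF M]] by blast
  \<comment> \<open>Chinese remainder theorem, in the form |I + M| |I \<inter> M| = |I| |M|\<close>
  then have "card W * card (?I \<inter> M) = card ?I * card M"
    using card_set_plus_mult_card_Int[OF additive_subgroup_W_ideal[OF I]
        additive_subgroup_W_ideal[OF maximal_W_idealD[OF M]]] by simp
  moreover have "W \<inter> \<Inter>(insert M T) = ?I \<inter> M" by blast
  ultimately have "card (W \<inter> \<Inter>(insert M T)) * card W ^ card (insert M T)
      = card M * (card ?I * card W ^ card T)"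
    using insert.hyps by (simp add: mult_ac)
  also have "\<dots> = card W * (\<Prod>M\<in>insert M T. card M)" using insert T by (simp add: mult_ac)
  finally show ?case .
qed simp

lemma q_mult_card_maximal_W_ideal_le:
  assumes M: "maximal_W_ideal M"
  shows "q * card M \<le> card W"
proof -
  have I: "W_ideal M" and "M \<noteq> W" using M unfolding maximal_W_ideal_def by auto
  then obtain b where b: "b \<in> W" "b \<notin> M" using W_idealD(1)[OF I] by blast
  \<comment> \<open>the cosets \<open>c b + M\<close>, \<open>c \<in> F\<close>, are pairwise disjoint\<close>
  have "inj_on (\<lambda>p. fst p * b + snd p) (F \<times> M)"
  proof (rule inj_onI)
    fix p p' assume p: "p \<in> F \<times> M" and p': "p' \<in> F \<times> M" and eq: "fst p * b + snd p = fst p' * b + snd p'"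
    have "fst p = fst p'"
    proof (rule ccontr)
      assume ne: "fst p \<noteq> fst p'"
      let ?c = "fst p - fst p'"
      have c: "?c \<in> F" "inverse ?c \<in> F" using p p' ne by (auto intro!: diff_mem inverse_mem)
      have "?c * b = snd p' - snd p" using eq by (simp add: algebra_simps)
      also have "\<dots> \<in> M" using additive_subgroupD(4)[OF additive_subgroup_W_ideal[OF I]] p p' by auto
      finally have "wmult (inverse ?c * \<alpha>) (?c * b) \<in> M"
        using W_idealD(4)[OF I] W_smult[OF c(2) conj_span_self] by blast
      moreover have "wmult (inverse ?c * \<alpha>) (?c * b) = inverse ?c * (?c * b)"
        by (rule wmult_smult_unit[OF c(2) W_smult[OF c(1) b(1)]])
      moreover have "inverse ?c * (?c * b) = b" using ne by (simp add: mult.assoc[symmetric])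
      ultimately show False using b(2) by simp
    qed
    then show "p = p'" using eq by (simp add: prod_eq_iff)
  qed
  moreover have "(\<lambda>p. fst p * b + snd p) ` (F \<times> M) \<subseteq> W"
    using W_smult b(1) W_idealD(1)[OF I] W_add by auto
  ultimately have "card (F \<times> M) \<le> card W" by (intro card_inj_on_le) simp_all
  then show ?thesis by (simp add: card_cartesian_product card_F)
qed

lemma exists_maximal_W_ideal:
  "W_ideal I \<Longrightarrow> I \<noteq> W \<Longrightarrow> \<exists>M. maximal_W_ideal M \<and> I \<subseteq> M"
proof (induct "card W - card I" arbitrary: I rule: less_induct)
  case less
  show ?case
  proof (cases "maximal_W_ideal I")
    case False
    then obtain J where J: "W_ideal J" "I \<subset> J" "J \<noteq> W"
      using less.prems unfolding maximal_W_ideal_def by blast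
    then have "card W - card J < card W - card I"
      using W_idealD(1)[OF J(1)] by (simp add: psubset_card_mono card_mono diff_less_mono2 less_le_trans)
    then show ?thesis using less.hyps[OF _ J(1,3)] J(2) by blast
  qed blast
qed

lemma conj_span_eq_W_if_unit:
  assumes y: "y \<in> W" and "z \<in> W" and "wmult z y = \<alpha>"
  shows "conj_span y = W"
proof
  show "conj_span y \<subseteq> W" by (rule conj_span_subset[OF y])
  have "\<alpha> = linearized (coeffs_of z) y" using assms(3) unfolding wmult_def by simp
  also have "\<dots> \<in> conj_span y"
    using coeffs_of[OF \<open>z \<in> W\<close>] conj_span_self by (intro linearized_mem_conj_span) auto
  finally show "W \<subseteq> conj_span y" by (rule conj_span_subset)
qed

lemma conj_span_eq_W_if_not_in_maximal:
  assumes y: "y \<in> W" and not_in: "\<forall>M. maximal_W_ideal M \<longrightarrow> y \<notin> M"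
  shows "conj_span y = W"
proof -
  let ?P = "{wmult z y |z. z \<in> W}"
  have ideal: "W_ideal ?P" unfolding W_ideal_def
  proof (intro conjI ballI)
    show "?P \<subseteq> W" using wmult_closed y by blast
    have "wmult 0 y = 0" using wmult_commute[OF W_zero y] wmult_0_right by simp
    then show "0 \<in> ?P" using W_zero by force
  next
    fix u v assume "u \<in> ?P" "v \<in> ?P"
    then obtain z z' where "z \<in> W" "u = wmult z y" "z' \<in> W" "v = wmult z' y" by blast
    then have "u + v = wmult (z + z') y" by (simp add: wmult_add_left y)
    then show "u + v \<in> ?P" using W_add \<open>z \<in> W\<close> \<open>z' \<in> W\<close> by blast
  next
    fix u v assume "u \<in> ?P" "v \<in> W"
    then obtain z where "z \<in> W" "u = wmult z y" by blast
    then have "wmult v u = wmult (wmult v z) y" using wmult_assoc[OF \<open>v \<in> W\<close> _ y] by simp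
    then show "wmult v u \<in> ?P" using wmult_closed[OF \<open>v \<in> W\<close> \<open>z \<in> W\<close>] by blast
  qed
  have "y = wmult \<alpha> y" using wmult_unit_left[OF y] by simp
  then have "y \<in> ?P" using conj_span_self by blast
  have "?P = W"
  proof (rule ccontr)
    assume "?P \<noteq> W"
    then obtain M where "maximal_W_ideal M" "?P \<subseteq> M" using exists_maximal_W_ideal[OF ideal] by blast
    then show False using not_in \<open>y \<in> ?P\<close> by blast
  qed
  then obtain z where z: "z \<in> W" "\<alpha> = wmult z y" using conj_span_self by blast
  then show ?thesis using conj_span_eq_W_if_unit[OF y z(1) z(2)[symmetric]] by simp
qed

abbreviation maximal_W_ideals :: "'a set set" where
  "maximal_W_ideals \<equiv> {M. maximal_W_ideal M}"

lemma card_W_pos: "card W > 0"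
  using conj_span_self[of \<alpha>] by (auto simp: card_gt_0_iff)

lemma finite_maximal_W_ideals: "finite maximal_W_ideals"
  by (rule finite_subset[of _ "Pow W"]) (auto dest: maximal_W_idealD W_idealD(1))

lemma maximal_W_ideals_nonempty:
  assumes "card W \<ge> 2"
  shows "maximal_W_ideals \<noteq> {}"
proof -
  have "W_ideal {0}" unfolding W_ideal_def using W_zero wmult_0_right by simp
  moreover have "card W \<noteq> card {0::'a}" using assms by simp
  then have "{0} \<noteq> W" by metis
  ultimately show ?thesis using exists_maximal_W_ideal by blast
qed

lemma card_Inter_maximal_W_ideals_eq:
  assumes "T \<subseteq> maximal_W_ideals"
  shows "real (card (W \<inter> \<Inter>T)) = real (card W) * (\<Prod>M\<in>T. real (card M) / real (card W))"
proof -
  have "finite T" using finite_maximal_W_ideals assms by (rule finite_subset[rotated])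
  have "card (W \<inter> \<Inter>T) * card W ^ card T = card W * (\<Prod>M\<in>T. card M)"
    using card_Inter_maximal_W_ideals[OF \<open>finite T\<close>] assms by blast
  then have "real (card (W \<inter> \<Inter>T)) * real (card W) ^ card T = real (card W) * (\<Prod>M\<in>T. real (card M))"
    by (metis of_nat_mult of_nat_power of_nat_prod)
  moreover have "real (card W) \<noteq> 0" and "W \<noteq> {}" using card_W_pos by auto
  ultimately show ?thesis by (simp add: prod_dividef field_simps)
qed

lemma card_maximal_W_ideal_div_le:
  assumes "M \<in> maximal_W_ideals"
  shows "real (card M) / real (card W) \<le> 1 / real q"
proof -
  have "real q * real (card M) \<le> real (card W)"
    using q_mult_card_maximal_W_ideal_le[of M] assms by (simp only: of_nat_mult[symmetric] of_nat_le_iff) simp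
  then show ?thesis using q_ge_2 card_W_pos by (simp add: field_simps)
qed

lemma q_pow_card_maximal_W_ideals_le: "q ^ card maximal_W_ideals \<le> card W"
proof -
  have "0 \<in> W \<inter> \<Inter>maximal_W_ideals"
    using W_zero W_idealD(2) by (auto dest: maximal_W_idealD)
  then have "1 \<le> real (card (W \<inter> \<Inter>maximal_W_ideals))" by (auto simp: card_gt_0_iff Suc_le_eq)
  also have "\<dots> \<le> real (card W) * (\<Prod>M\<in>maximal_W_ideals. 1 / real q)"
    unfolding card_Inter_maximal_W_ideals_eq[OF order_refl]
    by (intro mult_left_mono prod_mono) (auto simp: card_maximal_W_ideal_div_le)
  finally have "real q ^ card maximal_W_ideals \<le> real (card W)"
    using q_ge_2 by (simp add: power_one_over field_simps)
  then show ?thesis by (simp flip: of_nat_power)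
qed

text \<open>Inclusion-exclusion over the maximal ideals: the alternating sum of the sizes of their
  intersections is the number of units, \<open>|W| \<Prod>(1 - |M|/|W|)\<close> by the Chinese remainder theorem.\<close>
lemma sum_Pow_card_Inter_maximal_W_ideals_ge:
  "real (card W) * (1 - 1 / real q) ^ card maximal_W_ideals
    \<le> (\<Sum>T\<in>Pow maximal_W_ideals. (-1) ^ card T * real (card (W \<inter> \<Inter>T)))"
proof -
  let ?ratio = "\<lambda>M. real (card M) / real (card W)"
  have "(\<Prod>M\<in>maximal_W_ideals. 1 - 1 / real q) \<le> (\<Prod>M\<in>maximal_W_ideals. - ?ratio M + 1)"
    using q_ge_2 by (intro prod_mono) (auto simp: card_maximal_W_ideal_div_le)
  also have "\<dots> = (\<Sum>T\<in>Pow maximal_W_ideals. (\<Prod>M\<in>T. - ?ratio M) * (\<Prod>M\<in>maximal_W_ideals - T. 1))"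
    by (rule prod_add[OF finite_maximal_W_ideals])
  also have "\<dots> = (\<Sum>T\<in>Pow maximal_W_ideals. (-1) ^ card T * (\<Prod>M\<in>T. ?ratio M))"
    by (simp add: prod_uminus)
  finally have "real (card W) * (1 - 1 / real q) ^ card maximal_W_ideals
      \<le> real (card W) * (\<Sum>T\<in>Pow maximal_W_ideals. (-1) ^ card T * (\<Prod>M\<in>T. ?ratio M))"
    by (intro mult_left_mono) simp_all
  also have "\<dots> = (\<Sum>T\<in>Pow maximal_W_ideals. (-1) ^ card T * (real (card W) * (\<Prod>M\<in>T. ?ratio M)))"
    by (simp add: sum_distrib_left mult_ac)
  also have "\<dots> = (\<Sum>T\<in>Pow maximal_W_ideals. (-1) ^ card T * real (card (W \<inter> \<Inter>T)))"
    by (intro sum.cong refl) (simp add: card_Inter_maximal_W_ideals_eq)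
  finally show ?thesis .
qed

lemma card_primitive_units_ge:
  assumes "card W \<ge> 2"
  shows "coprime_density (q ^ n - 1) * real (card W) * (1 - 1 / real q) ^ card maximal_W_ideals
      - 2 ^ card maximal_W_ideals * (2 ^ card (prime_factors (q ^ n - 1)) * sqrt (real q ^ n))
    \<le> real (card {x\<in>W. primitive_elem x \<and> (\<forall>M\<in>maximal_W_ideals. x \<notin> M)})"
proof -
  obtain g :: 'a where "primitive_elem g" using primitive_elem_exists by blast
  then interpret finite_field_generator g by unfold_locales
  let ?MM = maximal_W_ideals and ?\<theta> = "coprime_density (q ^ n - 1)"
  let ?E = "2 ^ card (prime_factors (q ^ n - 1)) * sqrt (real q ^ n)"
  define e where "e T = real (card {x\<in>W \<inter> \<Inter>T. primitive_elem x}) - ?\<theta> * (real (card (W \<inter> \<Inter>T)) - 1)"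
    for T
  have e_bound: "\<bar>e T\<bar> \<le> ?E" if "T \<subseteq> ?MM" for T
  proof -
    have "additive_subgroup (W \<inter> \<Inter>T)"
      using that by (intro additive_subgroup_W_ideal W_ideal_Inter) (auto dest: maximal_W_idealD)
    then have "\<bar>real (card {x\<in>W \<inter> \<Inter>T. primitive_elem x}) - coprime_density unit_card * (real (card (W \<inter> \<Inter>T)) - 1)\<bar>
        \<le> 2 ^ card (prime_factors unit_card) * sqrt (real (card (UNIV :: 'a set)))"
      by (rule abs_card_primitive_additive_subgroup_le)
    then show ?thesis unfolding e_def unit_card_def card_UNIV of_nat_power .
  qed
  have "\<bar>\<Sum>T\<in>Pow ?MM. (-1) ^ card T * e T\<bar> \<le> 2 ^ card ?MM * ?E"
    using finite_maximal_W_ideals e_bound by (rule abs_sum_Pow_neg_one_pow_le)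
  moreover have "real (card {x\<in>W. primitive_elem x \<and> (\<forall>M\<in>?MM. x \<notin> M)})
      = (\<Sum>T\<in>Pow ?MM. (-1) ^ card T * real (card {x\<in>W \<inter> \<Inter>T. primitive_elem x}))"
    by (rule card_avoiding_eq_sum_Pow) (simp_all add: finite_maximal_W_ideals)
  moreover have "\<dots> = ?\<theta> * (\<Sum>T\<in>Pow ?MM. (-1) ^ card T * real (card (W \<inter> \<Inter>T)))
      + (\<Sum>T\<in>Pow ?MM. (-1) ^ card T * e T)"
  proof -
    have "(\<Sum>T\<in>Pow ?MM. (-1) ^ card T * ?\<theta>) = 0"
      using sum_Pow_neg_one_pow_card[where 'c=real, OF finite_maximal_W_ideals maximal_W_ideals_nonempty[OF assms]]
      by (simp flip: sum_distrib_right)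
    then show ?thesis unfolding e_def by (simp add: algebra_simps sum.distrib sum_subtractf sum_distrib_left)
  qed
  moreover have "?\<theta> * (real (card W) * (1 - 1 / real q) ^ card ?MM)
      \<le> ?\<theta> * (\<Sum>T\<in>Pow ?MM. (-1) ^ card T * real (card (W \<inter> \<Inter>T)))"
    using sum_Pow_card_Inter_maximal_W_ideals_ge less_imp_le[OF coprime_density_pos] by (rule mult_left_mono)
  ultimately show ?thesis by (simp add: mult.assoc)
qed

lemma exists_primitive_k_normal:
  assumes \<alpha>: "k_normal F q n k \<alpha>" and q: "q \<ge> 301" and n: "n \<ge> 16" and k: "8 * k \<le> n"
  shows "\<exists>x. k_normal F q n k x \<and> primitive_elem x"
proof -
  let ?MM = maximal_W_ideals
  have "k \<le> n" using k by simp
  then have card_W: "card W = q ^ (n - k)" using \<alpha> k_normal_iff_card_conj_span by blast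
  have "q ^ 1 \<le> q ^ (n - k)" using q n k by (intro power_increasing) simp_all
  then have "card W \<ge> 2" using card_W q by simp
  have "q ^ card ?MM \<le> q ^ (n - k)" using q_pow_card_maximal_W_ideals_le card_W by simp
  then have r: "card ?MM \<le> n - k" using q by (simp add: power_le_imp_le_exp)
  have less: "real (q ^ n - 1) < real q ^ n" using q by (simp add: of_nat_diff)
  have "q ^ n - 1 > 0" using one_less_power[of q n] q n by simp
  then have "(2 ^ card (prime_factors (q ^ n - 1)) / coprime_density (q ^ n - 1)) ^ 5 \<le> 2 ^ 32 * real (q ^ n - 1)"
    by (rule prime_factors_count_bound)
  moreover have "7 * n \<le> 8 * (n - k)" using k by simp
  ultimately have "2 ^ card ?MM * 2 ^ card (prime_factors (q ^ n - 1)) * sqrt (real q ^ n)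
      < coprime_density (q ^ n - 1) * real q ^ (n - k) * (1 - 1 / real q) ^ card ?MM"
    using counting_inequality[OF q n _ r coprime_density_pos _ less] by blast
  then have "card {x\<in>W. primitive_elem x \<and> (\<forall>M\<in>?MM. x \<notin> M)} > 0"
    using card_primitive_units_ge[OF \<open>card W \<ge> 2\<close>] card_W by (simp add: mult_ac)
  then obtain x where x: "x \<in> W" "primitive_elem x" "\<forall>M. maximal_W_ideal M \<longrightarrow> x \<notin> M"
    by (auto simp: card_gt_0_iff)
  then have "conj_span x = W" by (intro conj_span_eq_W_if_not_in_maximal)
  then have "k_normal F q n k x" using k_normal_iff_card_conj_span[OF \<open>k \<le> n\<close>] card_W by simp
  then show ?thesis using x by blast
qed

end

theorem corollary3p6:
  fixes F :: "'a::{field,finite} set" and q n k :: nat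
  assumes "prime_power q" and "n > 0"
    and "is_subfield F" and "card F = q" and "card (UNIV :: 'a set) = q ^ n"
    and "(q \<ge> 567 \<and> n \<ge> 16) \<or> (q \<ge> 435 \<and> n \<ge> 24) \<or> (q \<ge> 381 \<and> n \<ge> 32) \<or>
         (q \<ge> 352 \<and> n \<ge> 40) \<or> (q \<ge> 334 \<and> n \<ge> 48) \<or> (q \<ge> 301 \<and> n \<ge> 80)"
    and "8 * k \<le> n"
    and "\<exists>\<alpha>::'a. k_normal F q n k \<alpha>"
  shows "\<exists>\<alpha>::'a. k_normal F q n k \<alpha> \<and> primitive_elem \<alpha>"
proof -
  interpret field_extension F q n using assms(1-5) by unfold_locales
  obtain \<alpha> where \<alpha>: "k_normal F q n k \<alpha>" using assms(8) by blast
  interpret conj_span_ring F q n \<alpha> using assms(1-5) by unfold_locales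
  have "q \<ge> 301" and "n \<ge> 16" using assms(6) by auto
  then show ?thesis using exists_primitive_k_normal[OF \<alpha> _ _ assms(7)] by blast
qed

end
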